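(* Let $H=(E,\{X_i:i\in[n]\})$ be a hypergraph and $t_1,\dots,t_n$ integers with $0\le t_i\le|X_i|$ satisfying: (H2) $|X_i\cap X_j|\le1$ for all distinct $i,j$; (H3) there are no $a,b,c\in E$ with $\{a,b\},\{a,c\},\{b,c\}$ all hyperedges; (T) for each $i$, either $t_i=1$ or $\min\{w(e):e\in X_i\}\le t_i<|X_i|$. Let $\rho(A)=\sum_{i=1}^n\min\{|A\cap X_i|,t_i\}$ for $A\subseteq E$. Let $\sigma$ be any polymatroid on $E$ such that $\sigma(A)=\rho(A)$ for every $A\subseteq E$ satisfying at least one of: (a) $|A|\le3$; (b) $|A|=4$ and there are three hyperedges $X_h,X_i,X_j$ with $t_h=t_i=t_j=1$ such that some element of $A$ lies in exactly one of these three hyperedges and each of the other three elements of $A$ lies in exactly two of them; (c) $A\subseteq X_i$ and $|A|\le t_i+1$ for some $i\in[n]$; (d) $A\subseteq X_i\triangle X_j$ for some $i,j\in[n]$ with $X_i\cap X_j\ne\emptyset$, where $|A\cap X_i|\le t_i$ and $|A\cap X_j|\le t_j$. Then, for each positive integer $k$, from every element of $\Delta_\sigma^k$ one can construct a proper $k$-coloring $c$ of the line graph $G_H$, and this coloring satisfies $\sigma(E)\ge c_1+2c_2^+$. If $\sigma=\rho$, then the image of the map $\phi$ (defined below) on proper $k$-colorings of $G_H$ is exactly $\Delta_\rho^k$. If $\sigma(E)<\chi(G_H)$, then $\sigma$ is indecomposable.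
   Context: A polymatroid on a finite set $E$ is a function $\rho:2^E\to\mathbb{Z}$ that is normalized, non-decreasing and submodular. A hypergraph is $H=(E,\mathcal{E})$ with $E$ finite and $\mathcal{E}=\{X_i:i\in[n]\}$ a set of nonempty subsets of $E$; $w(e)$ is the number of hyperedges containing $e$; $\triangle$ is symmetric difference. The line graph $G_H$ has vertex set $[n]$ with $ij$ an edge iff $i\ne j$ and $X_i\cap X_j\ne\emptyset$. For a proper $k$-coloring $c:[n]\to[k]$, $c_1$ (resp. $c_2^+$) is the number of $i\in[k]$ with $|c^{-1}(i)|=1$ (resp. $\ge2$). $\Delta_\sigma^k$ is the set of $k$-tuples $(N_1,\dots,N_k)$ of matroids on $E$ with $\sigma=r_{N_1}+\cdots+r_{N_k}$. A polymatroid is indecomposable if it is not a sum of rank functions of finitely many matroids on $E$. The map $\phi$ sends a proper $k$-coloring $c$ to $(N_1,\dots,N_k)$ with $N_i=\bigl(\bigoplus_{h:c(h)=i}U_{t_h,X_h}\bigr)\oplus U_{0,Y}$, $Y=E-\bigcup_{h:c(h)=i}X_h$, where $U_{r,X}$ is the rank-$r$ uniform matroid on $X$. *)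

theory Defs
  imports Main
begin

definition polymatroid :: "'a set \<Rightarrow> ('a set \<Rightarrow> int) \<Rightarrow> bool" where
  "polymatroid E f \<longleftrightarrow>
     f {} = 0 \<and>
     (\<forall>A B. A \<subseteq> B \<and> B \<subseteq> E \<longrightarrow> f A \<le> f B) \<and>
     (\<forall>A B. A \<subseteq> E \<and> B \<subseteq> E \<longrightarrow> f (A \<union> B) + f (A \<inter> B) \<le> f A + f B)"

text \<open>A matroid on E is represented by its rank function. To make matroids on E
  correspond bijectively to their representations, the rank function is required to be
  determined by its values on subsets of E (r A = r (A \<inter> E)).\<close>
definition matroid_rank :: "'a set \<Rightarrow> ('a set \<Rightarrow> int) \<Rightarrow> bool" where
  "matroid_rank E r \<longleftrightarrow>
     (\<forall>A. r A = r (A \<inter> E)) \<and>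
     (\<forall>A. A \<subseteq> E \<longrightarrow> 0 \<le> r A \<and> r A \<le> int (card A)) \<and>
     (\<forall>A B. A \<subseteq> B \<and> B \<subseteq> E \<longrightarrow> r A \<le> r B) \<and>
     (\<forall>A B. A \<subseteq> E \<and> B \<subseteq> E \<longrightarrow> r (A \<union> B) + r (A \<inter> B) \<le> r A + r B)"

definition Delta :: "'a set \<Rightarrow> ('a set \<Rightarrow> int) \<Rightarrow> nat \<Rightarrow> ('a set \<Rightarrow> int) list set" where
  "Delta E \<sigma> k = {N. length N = k \<and> (\<forall>r \<in> set N. matroid_rank E r) \<and>
                      (\<forall>A. A \<subseteq> E \<longrightarrow> \<sigma> A = (\<Sum>r\<leftarrow>N. r A))}"

definition indecomposable :: "'a set \<Rightarrow> ('a set \<Rightarrow> int) \<Rightarrow> bool" where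
  "indecomposable E \<sigma> \<longleftrightarrow> \<not> (\<exists>k N. N \<in> Delta E \<sigma> k)"

text \<open>Rank function of the uniform matroid U_{r,X} (extended to ground set E by loops).\<close>
definition uniform_rank :: "nat \<Rightarrow> 'a set \<Rightarrow> 'a set \<Rightarrow> int" where
  "uniform_rank r X A = int (min (card (A \<inter> X)) r)"

definition hypergraph :: "'a set \<Rightarrow> nat \<Rightarrow> (nat \<Rightarrow> 'a set) \<Rightarrow> bool" where
  "hypergraph E n X \<longleftrightarrow> finite E \<and> (\<forall>i \<in> {1..n}. X i \<noteq> {} \<and> X i \<subseteq> E) \<and> inj_on X {1..n}"

definition weight :: "nat \<Rightarrow> (nat \<Rightarrow> 'a set) \<Rightarrow> 'a \<Rightarrow> nat" where
  "weight n X e = card {i \<in> {1..n}. e \<in> X i}"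

definition rho :: "nat \<Rightarrow> (nat \<Rightarrow> 'a set) \<Rightarrow> (nat \<Rightarrow> nat) \<Rightarrow> 'a set \<Rightarrow> int" where
  "rho n X t A = (\<Sum>i = 1..n. int (min (card (A \<inter> X i)) (t i)))"

definition proper_coloring :: "nat \<Rightarrow> (nat \<Rightarrow> 'a set) \<Rightarrow> nat \<Rightarrow> (nat \<Rightarrow> nat) \<Rightarrow> bool" where
  "proper_coloring n X k c \<longleftrightarrow>
     (\<forall>i \<in> {1..n}. c i \<in> {1..k}) \<and>
     (\<forall>i \<in> {1..n}. \<forall>j \<in> {1..n}. i \<noteq> j \<and> X i \<inter> X j \<noteq> {} \<longrightarrow> c i \<noteq> c j)"

definition chromatic_number :: "nat \<Rightarrow> (nat \<Rightarrow> 'a set) \<Rightarrow> nat" where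
  "chromatic_number n X = (LEAST k. \<exists>c. proper_coloring n X k c)"

definition c_one :: "nat \<Rightarrow> nat \<Rightarrow> (nat \<Rightarrow> nat) \<Rightarrow> nat" where
  "c_one n k c = card {i \<in> {1..k}. card {h \<in> {1..n}. c h = i} = 1}"

definition c_two_plus :: "nat \<Rightarrow> nat \<Rightarrow> (nat \<Rightarrow> nat) \<Rightarrow> nat" where
  "c_two_plus n k c = card {i \<in> {1..k}. card {h \<in> {1..n}. c h = i} \<ge> 2}"

text \<open>The map \<phi>: N_i = (\<Oplus>_{h: c h = i} U_{t_h,X_h}) \<oplus> U_{0,Y}.\<close>
definition phi :: "'a set \<Rightarrow> nat \<Rightarrow> (nat \<Rightarrow> 'a set) \<Rightarrow> (nat \<Rightarrow> nat) \<Rightarrow> nat \<Rightarrow> (nat \<Rightarrow> nat)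
                    \<Rightarrow> ('a set \<Rightarrow> int) list" where
  "phi E n X t k c = map (\<lambda>i. \<lambda>A.
       (\<Sum>h \<in> {h \<in> {1..n}. c h = i}. uniform_rank (t h) (X h) A)
       + uniform_rank 0 (E - (\<Union>h \<in> {h \<in> {1..n}. c h = i}. X h)) A) [1..<k+1]"

definition H2 :: "nat \<Rightarrow> (nat \<Rightarrow> 'a set) \<Rightarrow> bool" where
  "H2 n X \<longleftrightarrow> (\<forall>i \<in> {1..n}. \<forall>j \<in> {1..n}. i \<noteq> j \<longrightarrow> card (X i \<inter> X j) \<le> 1)"

definition H3 :: "'a set \<Rightarrow> nat \<Rightarrow> (nat \<Rightarrow> 'a set) \<Rightarrow> bool" where
  "H3 E n X \<longleftrightarrow> \<not> (\<exists>a \<in> E. \<exists>b \<in> E. \<exists>c \<in> E. a \<noteq> b \<and> a \<noteq> c \<and> b \<noteq> c \<and>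
      {a, b} \<in> X ` {1..n} \<and> {a, c} \<in> X ` {1..n} \<and> {b, c} \<in> X ` {1..n})"

definition condT :: "nat \<Rightarrow> (nat \<Rightarrow> 'a set) \<Rightarrow> (nat \<Rightarrow> nat) \<Rightarrow> bool" where
  "condT n X t \<longleftrightarrow> (\<forall>i \<in> {1..n}. t i = 1 \<or>
      (Min (weight n X ` X i) \<le> t i \<and> t i < card (X i)))"

definition cond_b :: "nat \<Rightarrow> (nat \<Rightarrow> 'a set) \<Rightarrow> (nat \<Rightarrow> nat) \<Rightarrow> 'a set \<Rightarrow> bool" where
  "cond_b n X t A \<longleftrightarrow> card A = 4 \<and>
     (\<exists>h \<in> {1..n}. \<exists>i \<in> {1..n}. \<exists>j \<in> {1..n}. h \<noteq> i \<and> h \<noteq> j \<and> i \<noteq> j \<and>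
        t h = 1 \<and> t i = 1 \<and> t j = 1 \<and>
        (\<exists>a \<in> A. card {l \<in> {h, i, j}. a \<in> X l} = 1 \<and>
                 (\<forall>b \<in> A - {a}. card {l \<in> {h, i, j}. b \<in> X l} = 2)))"

definition cond_c :: "nat \<Rightarrow> (nat \<Rightarrow> 'a set) \<Rightarrow> (nat \<Rightarrow> nat) \<Rightarrow> 'a set \<Rightarrow> bool" where
  "cond_c n X t A \<longleftrightarrow> (\<exists>i \<in> {1..n}. A \<subseteq> X i \<and> card A \<le> t i + 1)"

definition cond_d :: "nat \<Rightarrow> (nat \<Rightarrow> 'a set) \<Rightarrow> (nat \<Rightarrow> nat) \<Rightarrow> 'a set \<Rightarrow> bool" where
  "cond_d n X t A \<longleftrightarrow> (\<exists>i \<in> {1..n}. \<exists>j \<in> {1..n}. X i \<inter> X j \<noteq> {} \<and>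
      A \<subseteq> (X i - X j) \<union> (X j - X i) \<and>
      card (A \<inter> X i) \<le> t i \<and> card (A \<inter> X j) \<le> t j)"

end

theory Submission
  imports Defs
begin

text \<open>Let the rank functions \<open>r\<^sub>1, \<dots>, r\<^sub>k\<close> of matroids sum to \<open>\<sigma>\<close>, and call
  \<open>\<Sum>e\<in>A. r\<^sub>j {e} - r\<^sub>j A\<close> the defect of \<open>A\<close> in the \<open>j\<close>-th matroid. Wherever \<open>\<sigma>\<close>
  agrees with \<open>\<rho>\<close>, the defects of \<open>A\<close> sum to its total excess
  \<open>\<Sum>\<^sub>i max 0 (|A \<inter> X\<^sub>i| - t\<^sub>i)\<close>. So every \<open>(t\<^sub>h + 1)\<close>-subset of \<open>X\<^sub>h\<close> is dependent
  in exactly one matroid, and an exchange argument (transitivity of parallelism if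
  \<open>t\<^sub>h = 1\<close>, an element of weight at most \<open>t\<^sub>h\<close> otherwise) shows that it is the same
  matroid for all of them: this matroid carries \<open>X\<^sub>h\<close>, i.e. restricts to
  \<open>U\<^bsub>t\<^sub>h, X\<^sub>h\<^esub>\<close> on it. Conditions (b) and (d) forbid two meeting hyperedges to be
  carried by the same matroid, so coloring each hyperedge by its carrier (a singleton
  hyperedge takes a spare matroid in which its element is a non-loop) is a proper
  coloring of \<open>G\<^sub>H\<close>. A color class with one hyperedge contributes a non-loop, one with
  two or more contributes two non-parallel elements, whence \<open>\<sigma> E \<ge> c\<^sub>1 + 2 c\<^sub>2\<^sup>+\<close>, and
  \<open>c\<^sub>1 + c\<^sub>2\<^sup>+ \<ge> \<chi>(G\<^sub>H)\<close> gives indecomposability. For \<open>\<sigma> = \<rho>\<close> each matroid is the direct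
  sum of the uniform matroids of its color class, which is the image under \<open>\<phi>\<close>.\<close>

section \<open>Rank functions and their defect\<close>

context
  fixes E :: "'a set" and r :: "'a set \<Rightarrow> int"
  assumes matroid: "matroid_rank E r"
begin

lemma matroid_rank_restrict: "r A = r (A \<inter> E)"
  using matroid by (simp add: matroid_rank_def)

lemma matroid_rank_nonneg: "A \<subseteq> E \<Longrightarrow> 0 \<le> r A"
  using matroid by (simp add: matroid_rank_def)

lemma matroid_rank_le_card: "A \<subseteq> E \<Longrightarrow> r A \<le> int (card A)"
  using matroid by (simp add: matroid_rank_def)

lemma matroid_rank_mono: "A \<subseteq> B \<Longrightarrow> B \<subseteq> E \<Longrightarrow> r A \<le> r B"
  using matroid by (simp add: matroid_rank_def)

lemma matroid_rank_submod: "A \<subseteq> E \<Longrightarrow> B \<subseteq> E \<Longrightarrow> r (A \<union> B) + r (A \<inter> B) \<le> r A + r B"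
  using matroid by (simp add: matroid_rank_def)

lemma matroid_rank_empty: "r {} = 0"
  using matroid_rank_nonneg[of "{}"] matroid_rank_le_card[of "{}"] by simp

lemma matroid_rank_singleton: "e \<in> E \<Longrightarrow> r {e} = 0 \<or> r {e} = 1"
  using matroid_rank_nonneg[of "{e}"] matroid_rank_le_card[of "{e}"] by auto

lemma matroid_rank_singleton_le: "e \<in> E \<Longrightarrow> r {e} \<le> 1"
  using matroid_rank_le_card[of "{e}"] by simp

lemma matroid_rank_Un_le:
  assumes "A \<subseteq> E" "B \<subseteq> E"
  shows "r (A \<union> B) \<le> r A + r B"
proof -
  have "0 \<le> r (A \<inter> B)" using assms by (intro matroid_rank_nonneg) blast
  with matroid_rank_submod[OF assms] show ?thesis by linarith
qed

lemma matroid_rank_UN_le: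
  "finite I \<Longrightarrow> (\<And>i. i \<in> I \<Longrightarrow> B i \<subseteq> E) \<Longrightarrow> r (\<Union>i\<in>I. B i) \<le> (\<Sum>i\<in>I. r (B i))"
proof (induction I rule: finite_induct)
  case empty
  then show ?case by (simp add: matroid_rank_empty)
next
  case (insert i I)
  then have "r (B i \<union> (\<Union>i\<in>I. B i)) \<le> r (B i) + r (\<Union>i\<in>I. B i)"
    by (intro matroid_rank_Un_le) auto
  with insert show ?case by simp
qed

lemma matroid_rank_le_sum_singletons: "finite A \<Longrightarrow> A \<subseteq> E \<Longrightarrow> r A \<le> (\<Sum>e\<in>A. r {e})"
  using matroid_rank_UN_le[of A "\<lambda>e. {e}"] by auto

end

text \<open>Since \<open>\<Sum>e\<in>A. r {e}\<close> counts the non-loops of \<open>A\<close>, the defect of \<open>A\<close> is the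
  nullity of \<open>A\<close> after deleting its loops.\<close>
definition defect :: "('a set \<Rightarrow> int) \<Rightarrow> 'a set \<Rightarrow> int" where
  "defect r A = (\<Sum>e\<in>A. r {e}) - r A"

lemma defect_empty: "r {} = 0 \<Longrightarrow> defect r {} = 0"
  by (simp add: defect_def)

lemma defect_of_nonloops: "(\<And>e. e \<in> A \<Longrightarrow> r {e} = 1) \<Longrightarrow> defect r A = int (card A) - r A"
  by (simp add: defect_def)

context
  fixes E :: "'a set" and r :: "'a set \<Rightarrow> int"
  assumes matroid: "matroid_rank E r"
begin

lemma defect_nonneg: "finite A \<Longrightarrow> A \<subseteq> E \<Longrightarrow> 0 \<le> defect r A"
  using matroid_rank_le_sum_singletons[OF matroid] by (simp add: defect_def)

lemma defect_supermod:
  assumes "finite A" "finite B" "A \<subseteq> E" "B \<subseteq> E"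
  shows "defect r A + defect r B \<le> defect r (A \<union> B) + defect r (A \<inter> B)"
  using matroid_rank_submod[OF matroid, of A B] sum.union_inter[of A B "\<lambda>e. r {e}"] assms
  by (simp add: defect_def)

lemma defect_Un_disjoint_ge:
  assumes "finite A" "finite B" "A \<subseteq> E" "B \<subseteq> E" "A \<inter> B = {}"
  shows "defect r A + defect r B \<le> defect r (A \<union> B)"
  using defect_supermod[OF assms(1-4)] assms(5) matroid_rank_empty[OF matroid]
  by (simp add: defect_empty)

lemma defect_mono:
  assumes "A \<subseteq> B" "finite B" "B \<subseteq> E"
  shows "defect r A \<le> defect r B"
proof -
  have "finite A" using assms finite_subset by blast
  then have "defect r A + defect r (B - A) \<le> defect r (A \<union> (B - A))"
    using assms by (intro defect_Un_disjoint_ge) auto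
  moreover have "0 \<le> defect r (B - A)" using assms by (intro defect_nonneg) auto
  ultimately show ?thesis using assms(1) by (simp add: Un_absorb1)
qed

lemma defect_insert_le:
  assumes "finite A" "A \<subseteq> E" "z \<in> E" "z \<notin> A"
  shows "defect r (insert z A) \<le> defect r A + r {z}"
  using matroid_rank_mono[OF matroid, of A "insert z A"] assms by (auto simp: defect_def)

lemma defect_UN_disjoint_ge:
  assumes "finite I" "finite A" "A \<subseteq> E" "\<And>i. i \<in> I \<Longrightarrow> P i \<subseteq> A"
    and "\<And>i i'. i \<in> I \<Longrightarrow> i' \<in> I \<Longrightarrow> i \<noteq> i' \<Longrightarrow> P i \<inter> P i' = {}"
  shows "(\<Sum>i\<in>I. defect r (P i)) \<le> defect r A"
proof -
  have "(\<Sum>i\<in>I. defect r (P i)) \<le> defect r (\<Union>i\<in>I. P i)"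
    using assms(1,4,5)
  proof (induction I rule: finite_induct)
    case empty
    then show ?case by (simp add: defect_empty matroid_rank_empty[OF matroid])
  next
    case (insert i I)
    have "P i \<inter> (\<Union>i\<in>I. P i) = {}" using insert.hyps(2) insert.prems(2) by blast
    moreover have "P i \<subseteq> A" "(\<Union>i\<in>I. P i) \<subseteq> A" using insert.prems(1) by auto
    ultimately have "defect r (P i) + defect r (\<Union>i\<in>I. P i) \<le> defect r (P i \<union> (\<Union>i\<in>I. P i))"
      using assms(2,3) by (intro defect_Un_disjoint_ge) (auto intro: finite_subset)
    with insert show ?case by simp
  qed
  also have "\<dots> \<le> defect r A" using assms by (intro defect_mono) auto
  finally show ?thesis .
qed

lemma defect_pair_pos_iff:
  assumes "a \<in> E" "b \<in> E" "a \<noteq> b"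
  shows "1 \<le> defect r {a, b} \<longleftrightarrow> r {a} = 1 \<and> r {b} = 1 \<and> r {a, b} \<le> 1"
  using matroid_rank_mono[OF matroid, of "{a}" "{a, b}"] matroid_rank_mono[OF matroid, of "{b}" "{a, b}"]
    matroid_rank_singleton[OF matroid, of a] matroid_rank_singleton[OF matroid, of b] assms
  by (auto simp: defect_def)

lemma defect_pair_trans:
  assumes "a \<in> E" "b \<in> E" "c \<in> E" "a \<noteq> b" "b \<noteq> c" "a \<noteq> c"
    and "1 \<le> defect r {a, b}" "1 \<le> defect r {b, c}"
  shows "1 \<le> defect r {a, c}"
proof -
  have ab: "r {a} = 1" "r {b} = 1" "r {a, b} \<le> 1" and bc: "r {c} = 1" "r {b, c} \<le> 1"
    using assms by (simp_all add: defect_pair_pos_iff)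
  have "r ({a, b} \<union> {b, c}) + r ({a, b} \<inter> {b, c}) \<le> r {a, b} + r {b, c}"
    using assms by (intro matroid_rank_submod[OF matroid]) auto
  moreover have "{a, b} \<union> {b, c} = {a, b, c}" "{a, b} \<inter> {b, c} = {b}" using assms by auto
  moreover have "r {a, c} \<le> r {a, b, c}" using assms by (intro matroid_rank_mono[OF matroid]) auto
  ultimately show ?thesis using assms ab bc by (simp add: defect_pair_pos_iff)
qed

end

lemma matroid_rank_Un_eq_of_insert_eq:
  assumes "matroid_rank E r" "finite Z" "S \<subseteq> E" "Z \<subseteq> E" "\<And>z. z \<in> Z \<Longrightarrow> r (insert z S) = r S"
  shows "r (S \<union> Z) = r S"
  using assms(2,4,5)
proof (induction Z rule: finite_induct)
  case empty
  then show ?case by simp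
next
  case (insert z Z)
  have "r (S \<union> Z \<union> insert z S) + r ((S \<union> Z) \<inter> insert z S) \<le> r (S \<union> Z) + r (insert z S)"
    using insert.prems assms(3) by (intro matroid_rank_submod[OF assms(1)]) auto
  moreover have "S \<union> Z \<union> insert z S = S \<union> insert z Z" by auto
  moreover have "r S \<le> r ((S \<union> Z) \<inter> insert z S)"
    using insert.prems assms(3) by (intro matroid_rank_mono[OF assms(1)]) auto
  moreover have "r (S \<union> Z) \<le> r (S \<union> insert z Z)"
    using insert.prems assms(3) by (intro matroid_rank_mono[OF assms(1)]) auto
  ultimately show ?case using insert by simp
qed

lemma defect_add_le_1_of_Un_eq_insert:
  assumes "matroid_rank E r" "finite Y" "insert u Y \<subseteq> E" "u \<notin> Y" "defect r Y = 0"
    and "Qa \<union> Qb = insert u Y" "defect r (Qa \<inter> Qb) = 0"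
  shows "defect r Qa + defect r Qb \<le> 1"
proof -
  have "finite Qa" "finite Qb" "Qa \<subseteq> E" "Qb \<subseteq> E"
    using assms(2,3,6) by (auto intro: finite_subset[of _ "insert u Y"])
  then have "defect r Qa + defect r Qb \<le> defect r (Qa \<union> Qb) + defect r (Qa \<inter> Qb)"
    by (rule defect_supermod[OF assms(1)])
  also have "\<dots> = defect r (insert u Y)" using assms(6,7) by simp
  also have "\<dots> \<le> defect r Y + r {u}" using assms by (intro defect_insert_le) auto
  also have "\<dots> \<le> 1" using assms(3,5) matroid_rank_singleton_le[OF assms(1), of u] by simp
  finally show ?thesis .
qed

lemma defect_ge_card_minus_1:
  assumes "matroid_rank E r" "B \<subseteq> A" "A \<subseteq> E" "\<And>e. e \<in> A \<Longrightarrow> r {e} = 1" "r A \<le> 1"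
  shows "int (card B) - 1 \<le> defect r B"
proof -
  have "defect r B = int (card B) - r B" using assms(2,4) by (intro defect_of_nonloops) blast
  with assms(5) matroid_rank_mono[OF assms(1-3)] show ?thesis by simp
qed

lemma defect_Un_pos:
  assumes "matroid_rank E r" "finite T" "finite T'" "insert e (T \<union> T') \<subseteq> E" "T \<inter> T' = {}"
    and "\<And>x. x \<in> T \<union> T' \<Longrightarrow> r {x} = 1" "r {e} = 1"
    and "r (insert e T) \<le> int (card T)" "r (insert e T') \<le> int (card T')"
  shows "1 \<le> defect r (T \<union> T')"
proof -
  have submod: "r (insert e T \<union> insert e T') + r (insert e T \<inter> insert e T') \<le> r (insert e T) + r (insert e T')"
    using assms(4) by (intro matroid_rank_submod[OF assms(1)]) auto
  have "insert e T \<union> insert e T' = insert e (T \<union> T')" "insert e T \<inter> insert e T' = {e}"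
    using assms(5) by auto
  then have "r (insert e (T \<union> T')) + r {e} \<le> r (insert e T) + r (insert e T')"
    using submod by metis
  moreover have "r (T \<union> T') \<le> r (insert e (T \<union> T'))"
    using assms(4) by (intro matroid_rank_mono[OF assms(1)]) auto
  moreover have "defect r (T \<union> T') = int (card T) + int (card T') - r (T \<union> T')"
    using defect_of_nonloops[of "T \<union> T'" r] assms(2,3,5,6) by (simp add: card_Un_disjoint)
  ultimately show ?thesis using assms(7-9) by linarith
qed

lemma uniform_rank_submod:
  assumes "finite (A \<inter> X)" "finite (B \<inter> X)"
  shows "uniform_rank s X (A \<union> B) + uniform_rank s X (A \<inter> B) \<le> uniform_rank s X A + uniform_rank s X B"
proof -
  have "(A \<union> B) \<inter> X = (A \<inter> X) \<union> (B \<inter> X)" "(A \<inter> B) \<inter> X = (A \<inter> X) \<inter> (B \<inter> X)" by blast+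
  moreover have "card ((A \<inter> X) \<union> (B \<inter> X)) + card ((A \<inter> X) \<inter> (B \<inter> X)) = card (A \<inter> X) + card (B \<inter> X)"
    using assms by (rule card_Un_Int[symmetric])
  moreover have "card ((A \<inter> X) \<inter> (B \<inter> X)) \<le> card (A \<inter> X)" "card ((A \<inter> X) \<inter> (B \<inter> X)) \<le> card (B \<inter> X)"
    using assms by (auto intro: card_mono)
  ultimately show ?thesis by (simp add: uniform_rank_def min_def)
qed

lemma matroid_rank_direct_sum_uniform:
  assumes "finite E" "finite C" "\<And>h. h \<in> C \<Longrightarrow> X h \<subseteq> E"
    and "\<And>h h'. h \<in> C \<Longrightarrow> h' \<in> C \<Longrightarrow> h \<noteq> h' \<Longrightarrow> X h \<inter> X h' = {}"
  shows "matroid_rank E (\<lambda>A. \<Sum>h\<in>C. uniform_rank (t h) (X h) A)"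
  unfolding matroid_rank_def
proof (intro conjI allI impI)
  fix A
  have "A \<inter> E \<inter> X h = A \<inter> X h" if "h \<in> C" for h using assms(3) that by blast
  then show "(\<Sum>h\<in>C. uniform_rank (t h) (X h) A) = (\<Sum>h\<in>C. uniform_rank (t h) (X h) (A \<inter> E))"
    by (simp add: uniform_rank_def)
next
  fix A :: "'a set" assume "A \<subseteq> E"
  then have fA: "finite A" using assms(1) finite_subset by blast
  show "0 \<le> (\<Sum>h\<in>C. uniform_rank (t h) (X h) A)" by (simp add: uniform_rank_def sum_nonneg)
  have "(\<Sum>h\<in>C. uniform_rank (t h) (X h) A) \<le> int (\<Sum>h\<in>C. card (A \<inter> X h))"
    by (simp add: uniform_rank_def sum_mono)
  also have "(\<Sum>h\<in>C. card (A \<inter> X h)) = card (\<Union>h\<in>C. A \<inter> X h)"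
    using assms(2,4) fA by (intro card_UN_disjoint[symmetric]) auto
  also have "card (\<Union>h\<in>C. A \<inter> X h) \<le> card A" using fA by (intro card_mono) auto
  finally show "(\<Sum>h\<in>C. uniform_rank (t h) (X h) A) \<le> int (card A)" by simp
next
  fix A B :: "'a set" assume "A \<subseteq> B \<and> B \<subseteq> E"
  then have "card (A \<inter> X h) \<le> card (B \<inter> X h)" for h
    using assms(1) by (intro card_mono) (auto intro: finite_subset)
  then show "(\<Sum>h\<in>C. uniform_rank (t h) (X h) A) \<le> (\<Sum>h\<in>C. uniform_rank (t h) (X h) B)"
    unfolding uniform_rank_def by (intro sum_mono) (simp add: min.coboundedI1)
next
  fix A B :: "'a set" assume "A \<subseteq> E \<and> B \<subseteq> E"
  then have fin: "finite (A \<inter> X h)" "finite (B \<inter> X h)" for h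
    using assms(1) by (auto intro: finite_subset)
  have "uniform_rank (t h) (X h) (A \<union> B) + uniform_rank (t h) (X h) (A \<inter> B)
      \<le> uniform_rank (t h) (X h) A + uniform_rank (t h) (X h) B" for h
    using uniform_rank_submod[OF fin] .
  then show "(\<Sum>h\<in>C. uniform_rank (t h) (X h) (A \<union> B)) + (\<Sum>h\<in>C. uniform_rank (t h) (X h) (A \<inter> B))
      \<le> (\<Sum>h\<in>C. uniform_rank (t h) (X h) A) + (\<Sum>h\<in>C. uniform_rank (t h) (X h) B)"
    by (simp add: sum.distrib[symmetric] sum_mono)
qed

lemma ex_ge_one_of_sum_ge_one:
  assumes "1 \<le> (\<Sum>x\<in>S. f x :: int)"
  shows "\<exists>x\<in>S. 1 \<le> f x"
proof (rule ccontr)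
  assume "\<not> ?thesis"
  then have "(\<Sum>x\<in>S. f x) \<le> 0" by (intro sum_nonpos) auto
  with assms show False by simp
qed

lemma ex1_ge_one_of_sum_eq_one:
  assumes "finite S" "(\<Sum>x\<in>S. f x) = (1 :: int)" "\<And>x. x \<in> S \<Longrightarrow> 0 \<le> f x"
  shows "\<exists>!x. x \<in> S \<and> 1 \<le> f x"
proof -
  obtain x where x: "x \<in> S" "1 \<le> f x" using ex_ge_one_of_sum_ge_one assms(2) by (metis order_refl)
  have "y = x" if "y \<in> S" "1 \<le> f y" for y
  proof (rule ccontr)
    assume "y \<noteq> x"
    then have "sum f {x, y} \<le> sum f S" using assms x that by (intro sum_mono2) auto
    with \<open>y \<noteq> x\<close> x that assms(2) show False by simp
  qed
  with x show ?thesis by blast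
qed

lemma card_filter_atLeastAtMost_1:
  "card {i \<in> {1..k}. P i} = card {j \<in> {..<k}. P (Suc j)}"
proof -
  have "{i \<in> {1..k}. P i} = Suc ` {j \<in> {..<k}. P (Suc j)}"
    unfolding image_Suc_lessThan[symmetric] by auto
  then show ?thesis by (simp add: card_image)
qed

lemma chromatic_number_le_card_image:
  assumes "proper_coloring n X k c"
  shows "chromatic_number n X \<le> card (c ` {1..n})"
proof -
  define U where "U = c ` {1..n}"
  obtain g where g: "bij_betw g U {0..<card U}"
    using ex_bij_betw_finite_nat[of U] by (auto simp: U_def)
  have "proper_coloring n X (card U) (\<lambda>h. g (c h) + 1)"
    unfolding proper_coloring_def
  proof (intro conjI ballI impI)
    fix i assume "i \<in> {1..n}"
    then show "g (c i) + 1 \<in> {1..card U}" using bij_betwE[OF g] by (force simp: U_def)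
  next
    fix i j assume "i \<in> {1..n}" "j \<in> {1..n}" "i \<noteq> j \<and> X i \<inter> X j \<noteq> {}"
    then have "c i \<noteq> c j" "c i \<in> U" "c j \<in> U"
      using assms by (auto simp: proper_coloring_def U_def)
    then show "g (c i) + 1 \<noteq> g (c j) + 1" using bij_betw_imp_inj_on[OF g] by (simp add: inj_on_eq_iff)
  qed
  then show ?thesis unfolding chromatic_number_def U_def by (intro Least_le) blast
qed

lemma card_image_le_c_one_c_two_plus:
  assumes "\<And>h. h \<in> {1..n} \<Longrightarrow> c h \<in> {1..k}"
  shows "card (c ` {1..n}) \<le> c_one n k c + c_two_plus n k c"
proof -
  define O1 where "O1 = {i \<in> {1..k}. card {h \<in> {1..n}. c h = i} = 1}"
  define O2 where "O2 = {i \<in> {1..k}. card {h \<in> {1..n}. c h = i} \<ge> 2}"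
  have "c ` {1..n} \<subseteq> O1 \<union> O2"
  proof
    fix i assume "i \<in> c ` {1..n}"
    then obtain h where h: "h \<in> {1..n}" "c h = i" by blast
    then have "card {h \<in> {1..n}. c h = i} \<noteq> 0" by auto
    then have "card {h \<in> {1..n}. c h = i} = 1 \<or> card {h \<in> {1..n}. c h = i} \<ge> 2" by arith
    moreover have "i \<in> {1..k}" using assms h by blast
    ultimately show "i \<in> O1 \<union> O2" unfolding O1_def O2_def by blast
  qed
  then have "card (c ` {1..n}) \<le> card (O1 \<union> O2)" unfolding O1_def O2_def by (intro card_mono) auto
  also have "\<dots> \<le> card O1 + card O2" by (rule card_Un_le)
  finally show ?thesis unfolding O1_def O2_def c_one_def c_two_plus_def .
qed

lemma ex_other_elem:
  assumes "2 \<le> card S"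
  shows "\<exists>b\<in>S. b \<noteq> a"
proof (rule ccontr)
  assume "\<not> ?thesis"
  then have "S \<subseteq> {a}" by blast
  then show False using assms card_mono[of "{a}" S] by simp
qed

lemma obtain_subset_with_card_containing:
  assumes "finite S" "e \<in> S" "m + 1 \<le> card S"
  obtains Q where "Q \<subseteq> S" "card Q = m + 1" "e \<in> Q"
proof -
  have "m \<le> card (S - {e})" using assms by simp
  then obtain R where R: "R \<subseteq> S - {e}" "card R = m" by (meson obtain_subset_with_card_n)
  moreover have "finite R" "e \<notin> R" using R assms(1) finite_subset by blast+
  ultimately have "card (insert e R) = m + 1" by simp
  with R assms(2) show ?thesis using that[of "insert e R"] by blast
qed

section \<open>Admissible hypergraphs\<close>

locale admissible_hypergraph =
  fixes E :: "'a set" and n :: nat and X :: "nat \<Rightarrow> 'a set" and t :: "nat \<Rightarrow> nat"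
  assumes hypergraph: "hypergraph E n X" and H2: "H2 n X" and H3: "H3 E n X"
    and condT: "condT n X t"
begin

lemma finite_E: "finite E"
  using hypergraph by (simp add: hypergraph_def)

lemma finite_subset_E: "A \<subseteq> E \<Longrightarrow> finite A"
  using finite_E finite_subset by blast

lemma hyperedge_subset: "i \<in> {1..n} \<Longrightarrow> X i \<subseteq> E"
  using hypergraph by (simp add: hypergraph_def)

lemma hyperedge_nonempty: "i \<in> {1..n} \<Longrightarrow> X i \<noteq> {}"
  using hypergraph by (simp add: hypergraph_def)

lemma finite_hyperedge: "i \<in> {1..n} \<Longrightarrow> finite (X i)"
  using hyperedge_subset finite_subset_E by blast

lemma hyperedge_inj: "i \<in> {1..n} \<Longrightarrow> j \<in> {1..n} \<Longrightarrow> X i = X j \<Longrightarrow> i = j"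
  using hypergraph by (auto simp: hypergraph_def dest: inj_onD)

lemma hyperedges_share_le_one:
  assumes "i \<in> {1..n}" "j \<in> {1..n}" "i \<noteq> j" "a \<in> X i" "a \<in> X j" "b \<in> X i" "b \<in> X j"
  shows "a = b"
proof -
  have "card {a, b} \<le> card (X i \<inter> X j)"
    using assms finite_hyperedge by (intro card_mono) auto
  also have "\<dots> \<le> 1" using H2 assms by (simp add: H2_def)
  finally show ?thesis by (cases "a = b") auto
qed

lemma card_Int_hyperedge_le_one:
  assumes "i \<in> {1..n}" "j \<in> {1..n}" "i \<noteq> j" "Q \<subseteq> X i"
  shows "card (Q \<inter> X j) \<le> 1"
proof -
  have "card (Q \<inter> X j) \<le> card (X i \<inter> X j)"
    using assms finite_hyperedge by (intro card_mono) auto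
  also have "\<dots> \<le> 1" using H2 assms by (simp add: H2_def)
  finally show ?thesis .
qed

lemma weight_pos:
  assumes "i \<in> {1..n}" "e \<in> X i"
  shows "1 \<le> weight n X e"
proof -
  have "{i \<in> {1..n}. e \<in> X i} \<noteq> {}" using assms by blast
  then show ?thesis unfolding weight_def by (simp add: Suc_leI card_gt_0_iff)
qed

lemma ex_light_element:
  assumes "i \<in> {1..n}" "t i \<noteq> 1"
  shows "\<exists>e\<in>X i. weight n X e \<le> t i"
proof -
  have "Min (weight n X ` X i) \<in> weight n X ` X i"
    using assms finite_hyperedge hyperedge_nonempty by (intro Min_in) auto
  moreover have "Min (weight n X ` X i) \<le> t i" using condT assms unfolding condT_def by blast
  ultimately show ?thesis by force
qed

lemma t_less_card: "i \<in> {1..n} \<Longrightarrow> t i \<noteq> 1 \<Longrightarrow> t i < card (X i)"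
  using condT unfolding condT_def by blast

lemma t_pos: "i \<in> {1..n} \<Longrightarrow> 1 \<le> t i"
proof (cases "t i = 1")
  case False
  moreover assume "i \<in> {1..n}"
  ultimately obtain e where "e \<in> X i" "weight n X e \<le> t i" using ex_light_element by blast
  with \<open>i \<in> {1..n}\<close> show ?thesis using weight_pos by (meson order_trans)
qed simp

lemma small_hyperedge:
  assumes "i \<in> {1..n}" "card (X i) \<le> t i"
  shows "t i = 1" "\<exists>a. X i = {a}"
proof -
  show "t i = 1" using t_less_card assms by fastforce
  then have "card (X i) = 1"
    using assms finite_hyperedge hyperedge_nonempty by (simp add: le_Suc_eq)
  then show "\<exists>a. X i = {a}" by (rule card_1_singletonE) blast
qed

lemma rho_singleton: "rho n X t {e} = int (weight n X e)"
proof -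
  have "rho n X t {e} = (\<Sum>i\<in>{1..n}. if e \<in> X i then 1 else 0)"
    unfolding rho_def using t_pos by (intro sum.cong) auto
  then show ?thesis by (simp add: weight_def sum.inter_filter[symmetric])
qed

definition excess :: "nat \<Rightarrow> 'a set \<Rightarrow> int" where
  "excess i A = int (card (A \<inter> X i)) - int (min (card (A \<inter> X i)) (t i))"

definition total_excess :: "'a set \<Rightarrow> int" where
  "total_excess A = (\<Sum>i\<in>{1..n}. excess i A)"

lemma excess_nonneg: "0 \<le> excess i A"
  by (simp add: excess_def)

lemma excess_eq_0: "i \<in> {1..n} \<Longrightarrow> card (A \<inter> X i) \<le> 1 \<Longrightarrow> excess i A = 0"
  using t_pos[of i] by (simp add: excess_def)

lemma excess_pos:
  assumes "i \<in> {1..n}" "t i = 1" "finite A" "a \<in> A \<inter> X i" "b \<in> A \<inter> X i" "a \<noteq> b"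
  shows "1 \<le> excess i A"
proof -
  have "card {a, b} \<le> card (A \<inter> X i)" using assms by (intro card_mono) auto
  with assms show ?thesis by (simp add: excess_def)
qed

lemma total_excess_ge_card:
  assumes "I \<subseteq> {1..n}" "\<And>i. i \<in> I \<Longrightarrow> 1 \<le> excess i A"
  shows "int (card I) \<le> total_excess A"
proof -
  have "int (card I) \<le> (\<Sum>i\<in>I. excess i A)"
    using assms(2) sum_mono[of I "\<lambda>_. 1::int"] by simp
  also have "\<dots> \<le> total_excess A"
    unfolding total_excess_def using assms(1) by (intro sum_mono2) (auto simp: excess_nonneg)
  finally show ?thesis .
qed

lemma sum_weight_eq_rho_plus_total_excess:
  assumes "finite A"
  shows "(\<Sum>e\<in>A. int (weight n X e)) = rho n X t A + total_excess A"
proof -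
  have "(\<Sum>e\<in>A. int (weight n X e)) = (\<Sum>e\<in>A. \<Sum>i\<in>{1..n}. if e \<in> X i then 1 else 0)"
    by (simp add: weight_def sum.inter_filter[symmetric])
  also have "\<dots> = (\<Sum>i\<in>{1..n}. \<Sum>e\<in>A. if e \<in> X i then 1 else 0)"
    by (rule sum.swap)
  also have "\<dots> = (\<Sum>i\<in>{1..n}. int (card (A \<inter> X i)))"
    using assms by (simp add: sum.inter_filter[symmetric] Int_def)
  finally show ?thesis
    by (simp add: rho_def total_excess_def excess_def sum_subtractf)
qed

lemma total_excess_subset_hyperedge:
  assumes "h \<in> {1..n}" "Q \<subseteq> X h"
  shows "total_excess Q = int (card Q) - int (min (card Q) (t h))"
proof -
  have "excess i Q = 0" if "i \<in> {1..n} - {h}" for i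
    using that card_Int_hyperedge_le_one[OF assms(1) _ _ assms(2), of i] by (intro excess_eq_0) auto
  then have "total_excess Q = excess h Q"
    unfolding total_excess_def using assms(1) by (simp add: sum.remove)
  with assms(2) show ?thesis by (simp add: excess_def Int_absorb2)
qed

lemma total_excess_pair:
  assumes "a \<noteq> b"
  shows "total_excess {a, b} = (if \<exists>h\<in>{1..n}. a \<in> X h \<and> b \<in> X h \<and> t h = 1 then 1 else 0)"
proof (cases "\<exists>h\<in>{1..n}. a \<in> X h \<and> b \<in> X h")
  case True
  then obtain h where h: "h \<in> {1..n}" "a \<in> X h" "b \<in> X h" by blast
  have "total_excess {a, b} = (if t h = 1 then 1 else 0)"
    using total_excess_subset_hyperedge[of h "{a, b}"] h assms t_pos[OF h(1)] by auto
  moreover have "h' = h" if "h' \<in> {1..n}" "a \<in> X h'" "b \<in> X h'" for h'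
    using hyperedges_share_le_one[of h' h a b] that h assms by blast
  ultimately show ?thesis using h by metis
next
  case False
  have "excess i {a, b} = 0" if "i \<in> {1..n}" for i
  proof (rule excess_eq_0[OF that])
    have "{a, b} \<inter> X i \<subseteq> {a} \<or> {a, b} \<inter> X i \<subseteq> {b}" using False that by blast
    then show "card ({a, b} \<inter> X i) \<le> 1" by (auto dest!: subset_singletonD)
  qed
  then have "total_excess {a, b} = 0" unfolding total_excess_def by simp
  with False show ?thesis by auto
qed

definition unit_triangle :: "nat \<Rightarrow> nat \<Rightarrow> nat \<Rightarrow> 'a \<Rightarrow> 'a \<Rightarrow> 'a \<Rightarrow> bool" where
  "unit_triangle h1 h2 h3 p q u \<longleftrightarrow>
     {h1, h2, h3} \<subseteq> {1..n} \<and> distinct [h1, h2, h3] \<and> t h1 = 1 \<and> t h2 = 1 \<and> t h3 = 1 \<and>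
     p \<in> X h1 \<inter> X h2 \<and> q \<in> X h1 \<inter> X h3 \<and> u \<in> X h2 \<inter> X h3 \<and> distinct [p, q, u]"

lemma unit_triangle_nonmem:
  assumes "unit_triangle h1 h2 h3 p q u" "x \<in> X h1" "x \<noteq> p" "x \<noteq> q"
  shows "u \<notin> X h1" "p \<notin> X h3" "q \<notin> X h2" "x \<notin> X h2" "x \<notin> X h3" "x \<noteq> u"
proof -
  have tr: "h1 \<in> {1..n}" "h2 \<in> {1..n}" "h3 \<in> {1..n}" "h1 \<noteq> h2" "h1 \<noteq> h3"
    "p \<in> X h1" "p \<in> X h2" "q \<in> X h1" "q \<in> X h3" "u \<in> X h2" "p \<noteq> q" "p \<noteq> u"
    using assms(1) by (simp_all add: unit_triangle_def)
  note share12 = hyperedges_share_le_one[OF tr(1,2,4)] and share13 = hyperedges_share_le_one[OF tr(1,3,5)]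
  show "u \<notin> X h1" using share12[of u p] tr by blast
  show "p \<notin> X h3" using share13[of p q] tr by blast
  show "q \<notin> X h2" using share12[of q p] tr by blast
  show "x \<notin> X h2" using share12[of x p] tr assms(2,3) by blast
  show "x \<notin> X h3" using share13[of x q] tr assms(2,4) by blast
  show "x \<noteq> u" using share12[of u p] tr assms(2) by blast
qed

lemma cond_b_unit_triangle:
  assumes "unit_triangle h1 h2 h3 p q u" "x \<in> X h1" "x \<noteq> p" "x \<noteq> q"
  shows "cond_b n X t {p, q, u, x}"
proof -
  note nm = unit_triangle_nonmem[OF assms]
  have tr: "{h1, h2, h3} \<subseteq> {1..n}" "distinct [h1, h2, h3]" "t h1 = 1" "t h2 = 1" "t h3 = 1"
    "p \<in> X h1 \<inter> X h2" "q \<in> X h1 \<inter> X h3" "u \<in> X h2 \<inter> X h3" "distinct [p, q, u]"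
    using assms(1) by (simp_all add: unit_triangle_def)
  have "{l \<in> {h1, h2, h3}. x \<in> X l} = {h1}" "{l \<in> {h1, h2, h3}. p \<in> X l} = {h1, h2}"
    "{l \<in> {h1, h2, h3}. q \<in> X l} = {h1, h3}" "{l \<in> {h1, h2, h3}. u \<in> X l} = {h2, h3}"
    using tr nm assms(2) by auto
  moreover have "{p, q, u, x} - {x} = {p, q, u}" using tr nm assms by auto
  ultimately have "\<exists>a\<in>{p, q, u, x}. card {l \<in> {h1, h2, h3}. a \<in> X l} = 1 \<and>
      (\<forall>b\<in>{p, q, u, x} - {a}. card {l \<in> {h1, h2, h3}. b \<in> X l} = 2)"
    using tr(2) by auto
  moreover have "card {p, q, u, x} = 4" using tr nm assms by auto
  moreover have "h1 \<in> {1..n}" "h2 \<in> {1..n}" "h3 \<in> {1..n}" "h1 \<noteq> h2" "h1 \<noteq> h3" "h2 \<noteq> h3"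
    using tr(1,2) by auto
  ultimately show ?thesis unfolding cond_b_def using tr(3-5) by blast
qed

lemma excess_unit_triangle_other:
  assumes "unit_triangle h1 h2 h3 p q u" "x \<in> X h1" "x \<noteq> p" "x \<noteq> q"
    and i: "i \<in> {1..n}" "i \<notin> {h1, h2, h3}"
  shows "excess i {p, q, u, x} \<le> (if x \<in> X i \<and> u \<in> X i then 1 else 0)"
proof -
  note nm = unit_triangle_nonmem[OF assms(1-4)]
  have tr: "h1 \<in> {1..n}" "h2 \<in> {1..n}" "h3 \<in> {1..n}"
    "p \<in> X h1 \<inter> X h2" "q \<in> X h1 \<inter> X h3" "u \<in> X h2 \<inter> X h3"
    using assms(1) by (simp_all add: unit_triangle_def)
  have Y: "card ({p, q, x} \<inter> X i) \<le> 1"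
    using card_Int_hyperedge_le_one[OF tr(1) i(1), of "{p, q, x}"] tr assms(2) i by auto
  have "{p, q, u, x} \<inter> X i \<subseteq> insert u ({p, q, x} \<inter> X i)" by auto
  then have "card ({p, q, u, x} \<inter> X i) \<le> card (insert u ({p, q, x} \<inter> X i))" by (intro card_mono) auto
  also have "\<dots> \<le> 2" using Y by (simp add: card_insert_if)
  finally have two: "card ({p, q, u, x} \<inter> X i) \<le> 2" .
  show ?thesis
  proof (cases "x \<in> X i \<and> u \<in> X i")
    case True
    then show ?thesis using two t_pos[OF i(1)] by (simp add: excess_def)
  next
    case False
    have "card ({p, q, u, x} \<inter> X i) \<le> 1"
    proof (cases "u \<in> X i")
      case True
      then have "p \<notin> X i" "q \<notin> X i"
        using hyperedges_share_le_one[of i h2 p u] hyperedges_share_le_one[of i h3 q u] tr i nm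
        by auto
      then show ?thesis using True False by auto
    next
      case False
      then have "{p, q, u, x} \<inter> X i = {p, q, x} \<inter> X i" by auto
      then show ?thesis using Y by simp
    qed
    then show ?thesis using False excess_eq_0[OF i(1)] by simp
  qed
qed

lemma total_excess_unit_triangle_le:
  assumes "unit_triangle h1 h2 h3 p q u" "x \<in> X h1" "x \<noteq> p" "x \<noteq> q"
  shows "total_excess {p, q, u, x} \<le> 5"
proof -
  define A where "A = {p, q, u, x}"
  define R where "R = {1..n} - {h1, h2, h3}"
  note nm = unit_triangle_nonmem[OF assms]
  have tr: "{h1, h2, h3} \<subseteq> {1..n}" "distinct [h1, h2, h3]" "t h1 = 1" "t h2 = 1" "t h3 = 1"
    "p \<in> X h1 \<inter> X h2" "q \<in> X h1 \<inter> X h3" "u \<in> X h2 \<inter> X h3" "distinct [p, q, u]"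
    using assms(1) by (simp_all add: unit_triangle_def)
  have "A \<inter> X h1 = {p, q, x}" "A \<inter> X h2 = {p, u}" "A \<inter> X h3 = {q, u}"
    unfolding A_def using tr nm assms(2) by auto
  then have "(\<Sum>i\<in>{h1, h2, h3}. excess i A) = 4"
    using tr nm assms by (simp add: excess_def)
  moreover have "(\<Sum>i\<in>R. excess i A) \<le> 1"
  proof -
    define S where "S = {i \<in> R. x \<in> X i \<and> u \<in> X i}"
    have "i = i'" if "i \<in> S" "i' \<in> S" for i i'
      using hyperedges_share_le_one[of i i' x u] nm(6) that unfolding S_def R_def by auto
    moreover have "finite S" unfolding S_def R_def by simp
    ultimately have "card S \<le> 1" using card_le_Suc0_iff_eq by (metis One_nat_def)
    have "(\<Sum>i\<in>R. excess i A) \<le> (\<Sum>i\<in>R. if x \<in> X i \<and> u \<in> X i then 1 else 0)"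
      unfolding A_def R_def using excess_unit_triangle_other[OF assms] by (intro sum_mono) auto
    also have "\<dots> = int (card S)"
      unfolding S_def R_def by (simp add: sum.inter_filter[symmetric])
    finally show ?thesis using \<open>card S \<le> 1\<close> by simp
  qed
  moreover have "total_excess A = (\<Sum>i\<in>R. excess i A) + (\<Sum>i\<in>{h1, h2, h3}. excess i A)"
    unfolding total_excess_def R_def using tr(1) by (intro sum.subset_diff) auto
  ultimately show ?thesis unfolding A_def by simp
qed

lemma total_excess_triple_ge_3:
  assumes "{ia, ib, ic} \<subseteq> {1..n}" "card {ia, ib, ic} = 3" "t ia = 1" "t ib = 1" "t ic = 1"
    and "distinct [a, b, c]" "{a, b} \<subseteq> X ia" "{a, c} \<subseteq> X ib" "{b, c} \<subseteq> X ic"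
  shows "3 \<le> total_excess {a, b, c}"
proof -
  have "1 \<le> excess ia {a, b, c}" "1 \<le> excess ib {a, b, c}" "1 \<le> excess ic {a, b, c}"
    using excess_pos[of ia "{a, b, c}" a b] excess_pos[of ib "{a, b, c}" a c] excess_pos[of ic "{a, b, c}" b c]
      assms by auto
  then show ?thesis using total_excess_ge_card[OF assms(1), of "{a, b, c}"] assms(2) by auto
qed

definition linking_edges :: "'a set \<Rightarrow> 'a set \<Rightarrow> nat set" where
  "linking_edges T T' = {g \<in> {1..n}. t g = 1 \<and> T \<inter> X g \<noteq> {} \<and> T' \<inter> X g \<noteq> {}}"

context
  fixes h h' T T'
  assumes h: "h \<in> {1..n}" "h' \<in> {1..n}" and T: "T \<subseteq> X h - X h'" "T' \<subseteq> X h' - X h"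
begin

lemma card_Int_other_le_2:
  assumes "i \<in> {1..n}" "i \<noteq> h" "i \<noteq> h'"
  shows "card ((T \<union> T') \<inter> X i) \<le> 2"
proof -
  have "card ((T \<union> T') \<inter> X i) \<le> card (T \<inter> X i) + card (T' \<inter> X i)"
    by (metis Int_Un_distrib2 card_Un_le)
  moreover have "card (T \<inter> X i) \<le> 1" "card (T' \<inter> X i) \<le> 1"
    using card_Int_hyperedge_le_one[OF h(1) assms(1), of T] card_Int_hyperedge_le_one[OF h(2) assms(1), of T']
      T assms by auto
  ultimately show ?thesis by simp
qed

lemma card_Int_linking_edge:
  assumes "g \<in> linking_edges T T'"
  shows "card ((T \<union> T') \<inter> X g) = 2"
proof -
  have g: "g \<in> {1..n}" "T \<inter> X g \<noteq> {}" "T' \<inter> X g \<noteq> {}"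
    using assms by (auto simp: linking_edges_def)
  then have "g \<noteq> h" "g \<noteq> h'" using T by auto
  obtain a b where "a \<in> T \<inter> X g" "b \<in> T' \<inter> X g" using g by blast
  moreover have "finite (X g)" using finite_hyperedge[OF g(1)] .
  ultimately have "card {a, b} \<le> card ((T \<union> T') \<inter> X g)" by (intro card_mono) auto
  moreover have "a \<noteq> b" using \<open>a \<in> T \<inter> X g\<close> \<open>b \<in> T' \<inter> X g\<close> T by blast
  ultimately show ?thesis
    using card_Int_other_le_2[OF g(1) \<open>g \<noteq> h\<close> \<open>g \<noteq> h'\<close>] by simp
qed

lemma total_excess_le_card_linking_edges:
  assumes "card T \<le> t h" "card T' \<le> t h'"
  shows "total_excess (T \<union> T') \<le> int (card (linking_edges T T'))"
proof -
  have "excess i (T \<union> T') \<le> (if i \<in> linking_edges T T' then 1 else 0)" if i: "i \<in> {1..n}" for i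
  proof (cases "i = h \<or> i = h'")
    case True
    then have "(T \<union> T') \<inter> X i = T \<and> i = h \<or> (T \<union> T') \<inter> X i = T' \<and> i = h'" using T by blast
    then have "excess i (T \<union> T') = 0" using assms by (auto simp: excess_def)
    then show ?thesis by simp
  next
    case False
    then have two: "card ((T \<union> T') \<inter> X i) \<le> 2" using card_Int_other_le_2[OF i] by blast
    show ?thesis
    proof (cases "i \<in> linking_edges T T'")
      case True
      then show ?thesis using two by (simp add: excess_def linking_edges_def)
    next
      case False
      then have "t i \<noteq> 1 \<or> (T \<union> T') \<inter> X i = T \<inter> X i \<or> (T \<union> T') \<inter> X i = T' \<inter> X i"
        using i by (auto simp: linking_edges_def)
      moreover have "card (T \<inter> X i) \<le> 1" "card (T' \<inter> X i) \<le> 1"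
        using card_Int_hyperedge_le_one[OF h(1) i, of T] card_Int_hyperedge_le_one[OF h(2) i, of T']
          T \<open>\<not> (i = h \<or> i = h')\<close> by auto
      ultimately have "excess i (T \<union> T') = 0"
        using two t_pos[OF i] excess_eq_0[OF i] by (auto simp: excess_def)
      then show ?thesis by simp
    qed
  qed
  then have "total_excess (T \<union> T') \<le> (\<Sum>i\<in>{1..n}. if i \<in> linking_edges T T' then 1 else 0)"
    unfolding total_excess_def by (intro sum_mono) auto
  also have "\<dots> = int (card {i \<in> {1..n}. i \<in> linking_edges T T'})"
    by (simp add: sum.inter_filter[symmetric])
  also have "{i \<in> {1..n}. i \<in> linking_edges T T'} = linking_edges T T'"
    by (auto simp: linking_edges_def)
  finally show ?thesis .
qed

lemma cond_d_Un:
  assumes "X h \<inter> X h' \<noteq> {}" "card T \<le> t h" "card T' \<le> t h'"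
  shows "cond_d n X t (T \<union> T')"
proof -
  have "(T \<union> T') \<inter> X h = T" "(T \<union> T') \<inter> X h' = T'" using T by auto
  then show ?thesis unfolding cond_d_def
  proof (intro bexI conjI)
    show "T \<union> T' \<subseteq> X h - X h' \<union> (X h' - X h)" using T by blast
  qed (use assms h in auto)
qed

end

end

section \<open>Matroids summing to \<open>\<rho>\<close> on the test sets\<close>

locale hypergraph_decomposition = admissible_hypergraph E n X t
  for E :: "'a set" and n X t +
  fixes k :: nat and r :: "nat \<Rightarrow> 'a set \<Rightarrow> int"
  assumes matroid: "j < k \<Longrightarrow> matroid_rank E (r j)"
    and agrees: "A \<subseteq> E \<Longrightarrow> card A \<le> 3 \<or> cond_b n X t A \<or> cond_c n X t A \<or> cond_d n X t A
      \<Longrightarrow> (\<Sum>j<k. r j A) = rho n X t A"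
begin

lemma defect_nonneg': "j < k \<Longrightarrow> A \<subseteq> E \<Longrightarrow> 0 \<le> defect (r j) A"
  using defect_nonneg[OF matroid] finite_subset_E by blast

lemma sum_defect_ge:
  "M \<subseteq> {..<k} \<Longrightarrow> A \<subseteq> E \<Longrightarrow> (\<Sum>m\<in>M. defect (r m) A) \<le> (\<Sum>m<k. defect (r m) A)"
  by (intro sum_mono2) (auto intro: defect_nonneg')

lemma card_le_sum_defect:
  assumes "M \<subseteq> {..<k}" "A \<subseteq> E" "\<And>m. m \<in> M \<Longrightarrow> 1 \<le> defect (r m) A"
  shows "int (card M) \<le> (\<Sum>m<k. defect (r m) A)"
proof -
  have "int (card M) \<le> (\<Sum>m\<in>M. defect (r m) A)" using assms(3) sum_mono[of M "\<lambda>_. 1::int"] by simp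
  also have "\<dots> \<le> (\<Sum>m<k. defect (r m) A)" using sum_defect_ge assms(1,2) by blast
  finally show ?thesis .
qed

lemma ex_other_defect_pos:
  assumes "j < k" "defect (r j) A < (\<Sum>m<k. defect (r m) A)"
  shows "\<exists>m<k. m \<noteq> j \<and> 1 \<le> defect (r m) A"
proof -
  have "(\<Sum>m<k. defect (r m) A) = defect (r j) A + (\<Sum>m\<in>{..<k} - {j}. defect (r m) A)"
    using assms(1) by (simp add: sum.remove)
  with assms(2) have "1 \<le> (\<Sum>m\<in>{..<k} - {j}. defect (r m) A)" by linarith
  then show ?thesis using ex_ge_one_of_sum_ge_one[of "\<lambda>m. defect (r m) A"] by blast
qed

lemma sum_rank_singleton: "e \<in> E \<Longrightarrow> (\<Sum>j<k. r j {e}) = int (weight n X e)"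
  using agrees[of "{e}"] rho_singleton by simp

lemma card_nonloops_eq_weight: "e \<in> E \<Longrightarrow> card {j \<in> {..<k}. r j {e} = 1} = weight n X e"
proof -
  assume e: "e \<in> E"
  have "(\<Sum>j<k. r j {e}) = (\<Sum>j<k. if r j {e} = 1 then 1 else 0)"
    using matroid_rank_singleton[OF matroid, of _ e] e by (intro sum.cong) force+
  then show ?thesis using sum_rank_singleton[OF e] by (simp add: sum.inter_filter[symmetric])
qed

lemma sum_defect:
  assumes "A \<subseteq> E" "card A \<le> 3 \<or> cond_b n X t A \<or> cond_c n X t A \<or> cond_d n X t A"
  shows "(\<Sum>j<k. defect (r j) A) = total_excess A"
proof -
  have "(\<Sum>j<k. defect (r j) A) = (\<Sum>e\<in>A. \<Sum>j<k. r j {e}) - (\<Sum>j<k. r j A)"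
    by (simp add: defect_def sum_subtractf sum.swap[of _ _ A])
  also have "(\<Sum>e\<in>A. \<Sum>j<k. r j {e}) = (\<Sum>e\<in>A. int (weight n X e))"
    using assms(1) by (intro sum.cong) (auto simp: sum_rank_singleton)
  finally show ?thesis
    using agrees[OF assms] sum_weight_eq_rho_plus_total_excess finite_subset_E[OF assms(1)] by simp
qed

lemma sum_defect_small: "A \<subseteq> E \<Longrightarrow> card A \<le> 3 \<Longrightarrow> (\<Sum>j<k. defect (r j) A) = total_excess A"
  by (simp add: sum_defect)

lemma sum_defect_in_hyperedge:
  assumes "h \<in> {1..n}" "P \<subseteq> X h" "card P \<le> t h + 1"
  shows "(\<Sum>j<k. defect (r j) P) = int (card P) - int (min (card P) (t h))"
proof -
  have "cond_c n X t P" using assms unfolding cond_c_def by blast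
  moreover have "P \<subseteq> E" using assms hyperedge_subset by blast
  ultimately have "(\<Sum>j<k. defect (r j) P) = total_excess P" by (simp add: sum_defect)
  with assms show ?thesis by (simp add: total_excess_subset_hyperedge)
qed

lemma defect_independent:
  assumes "h \<in> {1..n}" "P \<subseteq> X h" "card P \<le> t h" "j < k"
  shows "defect (r j) P = 0"
proof -
  have "P \<subseteq> E" using assms hyperedge_subset by blast
  have "defect (r j) P \<le> (\<Sum>m<k. defect (r m) P)"
    using sum_defect_ge[of "{j}" P] assms \<open>P \<subseteq> E\<close> by simp
  also have "\<dots> = 0" using sum_defect_in_hyperedge[of h P] assms by simp
  finally show ?thesis using defect_nonneg'[OF assms(4) \<open>P \<subseteq> E\<close>] by simp
qed

lemma sum_defect_pair_le_1:
  assumes "a \<in> E" "b \<in> E" "a \<noteq> b"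
  shows "(\<Sum>j<k. defect (r j) {a, b}) \<le> 1"
  using sum_defect_small[of "{a, b}"] total_excess_pair[of a b] assms by (simp add: card_insert_if)

lemma defect_pair_unique:
  assumes "j < k" "j' < k" "a \<in> E" "b \<in> E" "a \<noteq> b"
    and "1 \<le> defect (r j) {a, b}" "1 \<le> defect (r j') {a, b}"
  shows "j = j'"
proof (rule ccontr)
  assume "j \<noteq> j'"
  then have "defect (r j) {a, b} + defect (r j') {a, b} \<le> (\<Sum>m<k. defect (r m) {a, b})"
    using sum_defect_ge[of "{j, j'}" "{a, b}"] assms by simp
  also have "\<dots> \<le> 1" using sum_defect_pair_le_1 assms by blast
  finally show False using assms by simp
qed

lemma defect_pair_pos_imp_hyperedge:
  assumes "j < k" "a \<in> E" "b \<in> E" "a \<noteq> b" "1 \<le> defect (r j) {a, b}"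
  shows "\<exists>h\<in>{1..n}. a \<in> X h \<and> b \<in> X h \<and> t h = 1"
proof -
  have "defect (r j) {a, b} \<le> (\<Sum>m<k. defect (r m) {a, b})"
    using sum_defect_ge[of "{j}" "{a, b}"] assms by simp
  also have "\<dots> = total_excess {a, b}"
    using assms by (intro sum_defect_small) (auto simp: card_insert_if)
  finally show ?thesis using assms total_excess_pair[of a b] by (auto split: if_splits)
qed

definition owner :: "'a set \<Rightarrow> nat" where
  "owner Q = (THE j. j < k \<and> 1 \<le> defect (r j) Q)"

text \<open>The total excess of a \<open>(t h + 1)\<close>-subset of \<open>X h\<close> is \<open>1\<close>, so exactly one of the
  matroids finds it dependent.\<close>
lemma owner:
  assumes "h \<in> {1..n}" "Q \<subseteq> X h" "card Q = t h + 1"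
  shows "owner Q < k" "1 \<le> defect (r (owner Q)) Q"
    and "\<And>j. j < k \<Longrightarrow> 1 \<le> defect (r j) Q \<Longrightarrow> j = owner Q"
proof -
  have "\<exists>!j. j \<in> {..<k} \<and> 1 \<le> defect (r j) Q"
    using assms sum_defect_in_hyperedge[of h Q] hyperedge_subset
    by (intro ex1_ge_one_of_sum_eq_one) (auto intro: defect_nonneg')
  then have "\<exists>!j. j < k \<and> 1 \<le> defect (r j) Q" by simp
  then show "owner Q < k" "1 \<le> defect (r (owner Q)) Q"
    and "\<And>j. j < k \<Longrightarrow> 1 \<le> defect (r j) Q \<Longrightarrow> j = owner Q"
    unfolding owner_def by (metis (mono_tags, lifting) theI')+
qed

lemma circuit_nonloop:
  assumes "h \<in> {1..n}" "Q \<subseteq> X h" "card Q = t h + 1" "j < k" "1 \<le> defect (r j) Q" "z \<in> Q"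
  shows "r j {z} = 1"
proof -
  have QE: "Q \<subseteq> E" using assms hyperedge_subset by blast
  have "defect (r j) (Q - {z}) = 0"
    using assms finite_subset_E[OF QE] by (intro defect_independent[of h]) auto
  moreover have "defect (r j) (insert z (Q - {z})) \<le> defect (r j) (Q - {z}) + r j {z}"
    using assms QE finite_subset_E[OF QE] by (intro defect_insert_le[OF matroid]) auto
  moreover have "insert z (Q - {z}) = Q" using assms by auto
  ultimately have "1 \<le> r j {z}" using assms by simp
  then show ?thesis using matroid_rank_singleton_le[OF matroid] assms QE by force
qed

text \<open>\<open>carries h j\<close> says that the matroid \<open>j\<close> restricted to \<open>X h\<close> is the uniform
  matroid \<open>U\<^bsub>t h, X h\<^esub>\<close>: its \<open>t h\<close>-subsets are independent by \<open>defect_independent\<close>.\<close>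
definition carries :: "nat \<Rightarrow> nat \<Rightarrow> bool" where
  "carries h j \<longleftrightarrow> j < k \<and> (\<forall>e\<in>X h. r j {e} = 1) \<and>
     (\<forall>Q. Q \<subseteq> X h \<and> card Q = t h + 1 \<longrightarrow> 1 \<le> defect (r j) Q)"

lemma carries_rank_le:
  assumes "h \<in> {1..n}" "carries h j" "P \<subseteq> X h"
  shows "r j P \<le> int (t h)"
proof (cases "card P \<le> t h")
  case True
  with assms show ?thesis
    using matroid_rank_le_card[OF matroid, of j P] hyperedge_subset by (force simp: carries_def)
next
  case False
  have j: "j < k" and nonloop: "\<And>e. e \<in> X h \<Longrightarrow> r j {e} = 1" using assms(2) by (auto simp: carries_def)
  have PE: "P \<subseteq> E" using assms hyperedge_subset by blast
  obtain S where S: "S \<subseteq> P" "card S = t h" using False by (meson obtain_subset_with_card_n nat_le_linear)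
  have "defect (r j) S = 0" using S assms j by (intro defect_independent[of h]) auto
  then have rS: "r j S = int (t h)" using S assms(3) nonloop by (simp add: defect_of_nonloops subset_iff)
  have "r j (insert z S) = r j S" if z: "z \<in> P - S" for z
  proof -
    have "card (insert z S) = t h + 1" using z S finite_subset_E PE by (auto intro: finite_subset)
    moreover have "insert z S \<subseteq> X h" using z S assms(3) by blast
    ultimately have "1 \<le> defect (r j) (insert z S)" using assms(2) unfolding carries_def by blast
    moreover have "defect (r j) (insert z S) = int (card (insert z S)) - r j (insert z S)"
      using z S assms(3) nonloop by (intro defect_of_nonloops) blast
    ultimately have "r j (insert z S) \<le> int (t h)" using \<open>card (insert z S) = t h + 1\<close> by simp
    moreover have "r j S \<le> r j (insert z S)" using z S PE by (intro matroid_rank_mono[OF matroid[OF j]]) auto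
    ultimately show ?thesis using rS by simp
  qed
  then have "r j (S \<union> (P - S)) = r j S"
    using S PE finite_subset_E by (intro matroid_rank_Un_eq_of_insert_eq[OF matroid[OF j]]) auto
  then show ?thesis using S rS by (simp add: Un_absorb1)
qed

lemma owner_pair:
  assumes "h \<in> {1..n}" "t h = 1" "a \<in> X h" "b \<in> X h" "a \<noteq> b"
  shows "owner {a, b} < k" "1 \<le> defect (r (owner {a, b})) {a, b}"
    and "\<And>j. j < k \<Longrightarrow> 1 \<le> defect (r j) {a, b} \<Longrightarrow> j = owner {a, b}"
proof -
  have P: "{a, b} \<subseteq> X h" and C: "card {a, b} = t h + 1" using assms by auto
  show "owner {a, b} < k" "1 \<le> defect (r (owner {a, b})) {a, b}"
    and "\<And>j. j < k \<Longrightarrow> 1 \<le> defect (r j) {a, b} \<Longrightarrow> j = owner {a, b}"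
    using owner[OF assms(1) P C] by blast+
qed

text \<open>If the owners of \<open>{a, c}\<close> and \<open>{a, b}\<close> differed, transitivity of parallelism would
  make the owners of \<open>{a, b}\<close>, \<open>{a, c}\<close>, \<open>{b, c}\<close> pairwise distinct, and \<open>{a, b, c}\<close> would
  have total defect \<open>3\<close> but total excess \<open>2\<close>.\<close>
lemma owner_pair_eq:
  assumes h: "h \<in> {1..n}" "t h = 1" and abc: "a \<in> X h" "b \<in> X h" "c \<in> X h" "a \<noteq> b" "b \<noteq> c" "a \<noteq> c"
  shows "owner {a, c} = owner {a, b}"
proof (rule ccontr)
  define j1 j2 j3 where "j1 = owner {a, b}" and "j2 = owner {a, c}" and "j3 = owner {b, c}"
  assume "owner {a, c} \<noteq> owner {a, b}"
  then have "j1 \<noteq> j2" by (simp add: j1_def j2_def)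
  have E: "a \<in> E" "b \<in> E" "c \<in> E" using abc hyperedge_subset h by blast+
  note ab = owner_pair[OF h abc(1,2,4), folded j1_def]
    and ac = owner_pair[OF h abc(1,3,6), folded j2_def]
    and bc = owner_pair[OF h abc(2,3,5), folded j3_def]
  have "j3 \<noteq> j1"
  proof
    assume "j3 = j1"
    then have "1 \<le> defect (r j1) {a, c}"
      using defect_pair_trans[OF matroid[OF ab(1)] E abc(4-6) ab(2)] bc(2) by simp
    then show False using ac(3)[OF ab(1)] \<open>j1 \<noteq> j2\<close> by blast
  qed
  moreover have "j3 \<noteq> j2"
  proof
    assume "j3 = j2"
    then have "1 \<le> defect (r j2) {c, b}" using bc(2) by (simp add: insert_commute)
    then show False
      using defect_pair_trans[OF matroid[OF ac(1)] E(1,3,2) abc(6) not_sym[OF abc(5)] abc(4) ac(2)]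
        ab(3)[OF ac(1)] \<open>j1 \<noteq> j2\<close> by blast
  qed
  ultimately have "card {j1, j2, j3} = 3" using \<open>j1 \<noteq> j2\<close> by simp
  moreover have "1 \<le> defect (r m) {a, b, c}" if "m \<in> {j1, j2, j3}" for m
  proof -
    have mono: "defect (r m) P \<le> defect (r m) {a, b, c}" if "m < k" "P \<subseteq> {a, b, c}" for m P
      using defect_mono[OF matroid[OF that(1)] that(2)] E by simp
    show ?thesis using that ab(1,2) ac(1,2) bc(1,2) mono[of j1 "{a, b}"] mono[of j2 "{a, c}"] mono[of j3 "{b, c}"]
      by auto
  qed
  ultimately have "3 \<le> (\<Sum>m<k. defect (r m) {a, b, c})"
    using card_le_sum_defect[of "{j1, j2, j3}" "{a, b, c}"] ab(1) ac(1) bc(1) E by simp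
  moreover have "card {a, b, c} = 3" using abc by simp
  then have "(\<Sum>m<k. defect (r m) {a, b, c}) = 2"
    using sum_defect_small[of "{a, b, c}"] total_excess_subset_hyperedge[of h "{a, b, c}"] h abc E by simp
  ultimately show False by simp
qed

lemma owner_pairs_eq:
  assumes h: "h \<in> {1..n}" "t h = 1" and X: "a \<in> X h" "b \<in> X h" "c \<in> X h" "d \<in> X h"
    and "a \<noteq> b" "c \<noteq> d"
  shows "owner {a, b} = owner {c, d}"
proof -
  have share: "owner {x, y} = owner {x, z}"
    if "x \<in> X h" "y \<in> X h" "z \<in> X h" "x \<noteq> y" "x \<noteq> z" for x y z
  proof (cases "y = z")
    case False
    then show ?thesis using owner_pair_eq[OF h that(1-4) False that(5)] by simp
  qed simp
  show ?thesis
  proof (cases "a = c")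
    case True
    then show ?thesis using share[of a b d] X assms by simp
  next
    case False
    then have "owner {a, b} = owner {c, a}" using share[of a b c] X assms by (simp add: insert_commute)
    also have "\<dots> = owner {c, d}" using share[of c a d] X assms False by simp
    finally show ?thesis .
  qed
qed

lemma ex_carries_of_t_eq_1:
  assumes h: "h \<in> {1..n}" "t h = 1" and card: "2 \<le> card (X h)"
  shows "\<exists>j. carries h j"
proof -
  obtain a0 b0 where ab0: "a0 \<in> X h" "b0 \<in> X h" "a0 \<noteq> b0"
    using ex_other_elem[OF card] hyperedge_nonempty[OF h(1)] by blast
  define j0 where "j0 = owner {a0, b0}"
  have pairs: "owner {a, b} = j0" if "a \<in> X h" "b \<in> X h" "a \<noteq> b" for a b
    using owner_pairs_eq[OF h that(1,2) ab0(1,2) that(3) ab0(3)] by (simp add: j0_def)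
  have "carries h j0" unfolding carries_def
  proof (intro conjI ballI allI impI)
    show "j0 < k" using owner_pair(1)[OF h ab0] by (simp add: j0_def)
  next
    fix e assume e: "e \<in> X h"
    then obtain b where b: "b \<in> X h" "b \<noteq> e" using ex_other_elem[OF card] by blast
    have "1 \<le> defect (r j0) {e, b}" using owner_pair(2)[OF h e b(1)] pairs[OF e b(1)] b by simp
    then show "r j0 {e} = 1"
      using defect_pair_pos_iff[OF matroid] owner_pair(1)[OF h ab0] e b hyperedge_subset[OF h(1)]
      unfolding j0_def by blast
  next
    fix Q assume "Q \<subseteq> X h \<and> card Q = t h + 1"
    then obtain a b where "Q = {a, b}" "a \<in> X h" "b \<in> X h" "a \<noteq> b"
      using h(2) by (metis card_2_iff insert_subset one_add_one)
    then show "1 \<le> defect (r j0) Q" using owner_pair(2)[OF h] pairs by metis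
  qed
  then show ?thesis by blast
qed

lemma defect_exchange:
  assumes "h \<in> {1..n}" "W \<subseteq> X h" "card W = t h + 2" "j < k"
    and "z1 \<in> W" "z2 \<in> W" "z1 \<noteq> z2" "1 \<le> defect (r j) (W - {z1})" "1 \<le> defect (r j) (W - {z2})"
    and "z \<in> W"
  shows "1 \<le> defect (r j) (W - {z})"
proof -
  have WE: "W \<subseteq> E" using assms hyperedge_subset by blast
  have fW: "finite W" using WE finite_subset_E by blast
  have "defect (r j) (W - {z1}) + defect (r j) (W - {z2})
      \<le> defect (r j) ((W - {z1}) \<union> (W - {z2})) + defect (r j) ((W - {z1}) \<inter> (W - {z2}))"
    using WE fW by (intro defect_supermod[OF matroid[OF assms(4)]]) auto
  moreover have "(W - {z1}) \<union> (W - {z2}) = W" "(W - {z1}) \<inter> (W - {z2}) = W - {z1, z2}"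
    using assms by auto
  moreover have "card (W - {z1, z2}) = t h" using assms fW by (simp add: card_Diff_subset)
  then have "defect (r j) (W - {z1, z2}) = 0" using assms by (intro defect_independent[of h]) auto
  ultimately have "2 \<le> defect (r j) W" using assms by simp
  moreover have "defect (r j) (insert z (W - {z})) \<le> defect (r j) (W - {z}) + r j {z}"
    using assms WE fW by (intro defect_insert_le[OF matroid[OF assms(4)]]) auto
  moreover have "insert z (W - {z}) = W" using assms by auto
  moreover have "r j {z} \<le> 1" using assms WE matroid_rank_singleton_le[OF matroid[OF assms(4)]] by blast
  ultimately show ?thesis by simp
qed

text \<open>If \<open>z \<mapsto> owner (W - {z})\<close> were not constant, it would be injective by
  \<open>defect_exchange\<close>, and the \<open>t h + 1\<close> matroids owning the sets \<open>W - {z}\<close>, \<open>z \<noteq> e0\<close>,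
  would all have \<open>e0\<close> as a non-loop, exceeding the weight of \<open>e0\<close>.\<close>
lemma owner_Diff_eq:
  assumes h: "h \<in> {1..n}" and W: "W \<subseteq> X h" "card W = t h + 2"
    and e0: "e0 \<in> W" "weight n X e0 \<le> t h" and z: "z1 \<in> W" "z2 \<in> W"
  shows "owner (W - {z1}) = owner (W - {z2})"
proof (rule ccontr)
  assume ne: "owner (W - {z1}) \<noteq> owner (W - {z2})"
  have fW: "finite W" using W finite_hyperedge[OF h] finite_subset by blast
  have Wz: "W - {z} \<subseteq> X h" "card (W - {z}) = t h + 1" if "z \<in> W" for z
    using W fW that by auto
  have inj: "inj_on (\<lambda>z. owner (W - {z})) W"
  proof (rule inj_onI, rule ccontr)
    fix z z' assume zz: "z \<in> W" "z' \<in> W" "owner (W - {z}) = owner (W - {z'})" "z \<noteq> z'"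
    define m where "m = owner (W - {z})"
    have m: "m < k" "1 \<le> defect (r m) (W - {z})" "1 \<le> defect (r m) (W - {z'})"
      using owner(1,2)[OF h Wz[OF zz(1)]] owner(2)[OF h Wz[OF zz(2)]] zz(3) by (simp_all add: m_def)
    have "1 \<le> defect (r m) (W - {y})" if "y \<in> W" for y
      using defect_exchange[OF h W m(1) zz(1,2,4) m(2,3) that] .
    then have "m = owner (W - {z1})" "m = owner (W - {z2})"
      using owner(3)[OF h Wz] m(1) z by blast+
    with ne show False by simp
  qed
  define M where "M = (\<lambda>z. owner (W - {z})) ` (W - {e0})"
  have "card M = t h + 1"
    unfolding M_def using inj fW e0 W by (subst card_image) (auto intro: inj_on_subset)
  moreover have "M \<subseteq> {j \<in> {..<k}. r j {e0} = 1}"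
  proof
    fix m assume "m \<in> M"
    then obtain z where z: "z \<in> W" "z \<noteq> e0" "m = owner (W - {z})" unfolding M_def by blast
    then show "m \<in> {j \<in> {..<k}. r j {e0} = 1}"
      using owner(1,2)[OF h Wz[OF z(1)]] circuit_nonloop[OF h Wz[OF z(1)]] e0(1) by auto
  qed
  then have "card M \<le> weight n X e0"
    using card_mono[of "{j \<in> {..<k}. r j {e0} = 1}" M] card_nonloops_eq_weight[of e0]
      e0(1) W hyperedge_subset[OF h] by auto
  ultimately show False using e0(2) by simp
qed

lemma owner_eq_of_light_mem:
  assumes h: "h \<in> {1..n}" and e0: "weight n X e0 \<le> t h"
    and Q: "Q \<subseteq> X h" "card Q = t h + 1" "e0 \<in> Q"
    and Q0: "Q0 \<subseteq> X h" "card Q0 = t h + 1" "e0 \<in> Q0"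
  shows "owner Q = owner Q0"
  using Q
proof (induction "card (Q - Q0)" arbitrary: Q rule: less_induct)
  case less
  have fin: "finite Q" "finite Q0"
    using less.prems(1) Q0(1) finite_hyperedge[OF h] finite_subset by blast+
  show ?case
  proof (cases "Q = Q0")
    case False
    have "\<not> Q \<subseteq> Q0" "\<not> Q0 \<subseteq> Q"
      using False card_subset_eq[OF fin(2), of Q] card_subset_eq[OF fin(1), of Q0] less.prems(2) Q0(2)
      by auto
    then obtain x y where x: "x \<in> Q" "x \<notin> Q0" and y: "y \<in> Q0" "y \<notin> Q" by blast
    define W where "W = insert y Q"
    have W: "W \<subseteq> X h" "card W = t h + 2" "e0 \<in> W"
      using less.prems Q0 y fin unfolding W_def by auto
    have "owner Q = owner (W - {x})"
      using owner_Diff_eq[OF h W(1,2) W(3) e0, of y x] x y unfolding W_def by auto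
    also have "\<dots> = owner Q0"
    proof (rule less.hyps)
      have "(W - {x}) - Q0 = (Q - Q0) - {x}" using y unfolding W_def by auto
      moreover have "x \<in> Q - Q0" "finite (Q - Q0)" using x fin by auto
      ultimately show "card ((W - {x}) - Q0) < card (Q - Q0)" by (metis card_Diff1_less)
      show "W - {x} \<subseteq> X h" "e0 \<in> W - {x}" using W x Q0(3) by auto
      show "card (W - {x}) = t h + 1" using W x unfolding W_def by simp
    qed
    finally show ?thesis .
  qed simp
qed

lemma owner_eq_of_light:
  assumes h: "h \<in> {1..n}" and e0: "weight n X e0 \<le> t h"
    and Q: "Q \<subseteq> X h" "card Q = t h + 1"
    and Q0: "Q0 \<subseteq> X h" "card Q0 = t h + 1" "e0 \<in> Q0"
  shows "owner Q = owner Q0"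
proof (cases "e0 \<in> Q")
  case True
  then show ?thesis using owner_eq_of_light_mem[OF h e0 Q True Q0] by simp
next
  case False
  have fin: "finite Q" using Q finite_hyperedge[OF h] finite_subset by blast
  obtain x where x: "x \<in> Q" using Q by fastforce
  define W where "W = insert e0 Q"
  have W: "W \<subseteq> X h" "card W = t h + 2" "e0 \<in> W"
    using Q Q0 False fin unfolding W_def by auto
  have "owner Q = owner (W - {x})"
    using owner_Diff_eq[OF h W(1,2) W(3) e0, of e0 x] x False unfolding W_def by auto
  also have "\<dots> = owner Q0"
    using W x False fin unfolding W_def
    by (intro owner_eq_of_light_mem[OF h e0 _ _ _ Q0]) auto
  finally show ?thesis .
qed

lemma ex_carries_of_t_ne_1:
  assumes h: "h \<in> {1..n}" "t h \<noteq> 1"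
  shows "\<exists>j. carries h j"
proof -
  have card: "t h + 1 \<le> card (X h)" using t_less_card[OF h] by simp
  obtain e0 where e0: "e0 \<in> X h" "weight n X e0 \<le> t h" using ex_light_element[OF h] by blast
  obtain Q0 where Q0: "Q0 \<subseteq> X h" "card Q0 = t h + 1" "e0 \<in> Q0"
    using obtain_subset_with_card_containing[OF finite_hyperedge[OF h(1)] e0(1) card] .
  have "carries h (owner Q0)" unfolding carries_def
  proof (intro conjI ballI allI impI)
    show "owner Q0 < k" using owner(1)[OF h(1) Q0(1,2)] .
  next
    fix e assume e: "e \<in> X h"
    obtain Q where Q: "Q \<subseteq> X h" "card Q = t h + 1" "e \<in> Q"
      using obtain_subset_with_card_containing[OF finite_hyperedge[OF h(1)] e card] .
    then show "r (owner Q0) {e} = 1"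
      using circuit_nonloop[OF h(1) Q(1,2)] owner(1,2)[OF h(1) Q(1,2)]
        owner_eq_of_light[OF h(1) e0(2) Q(1,2) Q0] by simp
  next
    fix Q assume "Q \<subseteq> X h \<and> card Q = t h + 1"
    then show "1 \<le> defect (r (owner Q0)) Q"
      using owner(2)[OF h(1)] owner_eq_of_light[OF h(1) e0(2) _ _ Q0] by metis
  qed
  then show ?thesis by blast
qed

lemma ex_carries:
  assumes "h \<in> {1..n}" "t h + 1 \<le> card (X h)"
  shows "\<exists>j. carries h j"
  using ex_carries_of_t_eq_1 ex_carries_of_t_ne_1 assms by (cases "t h = 1") auto

lemma defect_other_eq_0:
  assumes "j < k" "m < k" "m \<noteq> j" "A \<subseteq> E" "(\<Sum>i<k. defect (r i) A) \<le> defect (r j) A"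
  shows "defect (r m) A = 0"
proof -
  have "defect (r j) A + defect (r m) A \<le> (\<Sum>i<k. defect (r i) A)"
    using sum_defect_ge[of "{j, m}" A] assms by simp
  with assms(5) defect_nonneg'[OF assms(2,4)] show ?thesis by simp
qed

lemma ex_other_defect_pos_triple:
  assumes "j < k" "Q \<subseteq> E" "card Q = 3" "u \<in> Q" "r j {u} = 1" "3 \<le> total_excess Q"
  shows "\<exists>m<k. m \<noteq> j \<and> 1 \<le> defect (r m) Q"
proof (rule ex_other_defect_pos[OF assms(1)])
  have "(\<Sum>e\<in>Q. r j {e}) \<le> (\<Sum>e\<in>Q. 1)"
    using assms(2) matroid_rank_singleton_le[OF matroid[OF assms(1)]] by (intro sum_mono) auto
  moreover have "r j {u} \<le> r j Q" using assms by (intro matroid_rank_mono[OF matroid[OF assms(1)]]) auto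
  ultimately have "defect (r j) Q \<le> 2" using assms(3,5) by (simp add: defect_def)
  then show "defect (r j) Q < (\<Sum>m<k. defect (r m) Q)"
    using sum_defect_small[OF assms(2)] assms(3,6) by simp
qed

lemma carried_unit_triangle_rank_le_1:
  assumes tri: "unit_triangle h1 h2 h3 p q u" and x: "x \<in> X h1"
    and carries: "carries h1 j" "carries h2 j"
  shows "r j {p, q, u, x} \<le> 1"
proof -
  have tr: "h1 \<in> {1..n}" "h2 \<in> {1..n}" "h1 \<noteq> h2" "t h1 = 1" "t h2 = 1"
    "p \<in> X h1" "p \<in> X h2" "q \<in> X h1" "u \<in> X h2" "p \<noteq> u"
    using tri by (simp_all add: unit_triangle_def)
  have j: "j < k" using carries(1) by (simp add: carries_def)
  have "u \<notin> X h1" using hyperedges_share_le_one[OF tr(1-3), of u p] tr by blast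
  then have "X h1 \<inter> {p, u} = {p}" using tr by auto
  moreover have "r j (X h1 \<union> {p, u}) + r j (X h1 \<inter> {p, u}) \<le> r j (X h1) + r j {p, u}"
    using tr hyperedge_subset by (intro matroid_rank_submod[OF matroid[OF j]]) auto
  moreover have "r j (X h1) \<le> 1" "r j {p, u} \<le> 1" "r j {p} = 1"
    using carries_rank_le[OF tr(1) carries(1), of "X h1"] carries_rank_le[OF tr(2) carries(2), of "{p, u}"]
      carries(1) tr by (auto simp: carries_def)
  moreover have "r j {p, q, u, x} \<le> r j (X h1 \<union> {p, u})"
    using tr x hyperedge_subset by (intro matroid_rank_mono[OF matroid[OF j]]) auto
  ultimately show ?thesis by simp
qed

lemma unit_triangle_other_owners:
  assumes tri: "unit_triangle h1 h2 h3 p q u" and x: "x \<in> X h1" "x \<noteq> p" "x \<noteq> q"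
    and carries: "carries h1 j" "carries h2 j"
  shows "\<exists>m1 m2 m3. m1 < k \<and> m1 \<noteq> j \<and> 1 \<le> defect (r m1) {p, q, u} \<and>
    m2 < k \<and> m2 \<noteq> j \<and> 1 \<le> defect (r m2) {p, x, u} \<and>
    m3 < k \<and> m3 \<noteq> j \<and> 1 \<le> defect (r m3) {q, x, u}"
proof -
  note nm = unit_triangle_nonmem[OF tri x]
  have tr: "h1 \<in> {1..n}" "h2 \<in> {1..n}" "h3 \<in> {1..n}" "distinct [h1, h2, h3]" "t h1 = 1" "t h2 = 1" "t h3 = 1"
    "p \<in> X h1 \<inter> X h2" "q \<in> X h1 \<inter> X h3" "u \<in> X h2 \<inter> X h3" "distinct [p, q, u]"
    using tri by (simp_all add: unit_triangle_def)
  have j: "j < k" using carries(1) by (simp add: carries_def)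
  have E: "p \<in> E" "q \<in> E" "u \<in> E" "x \<in> E" using tr x hyperedge_subset by blast+
  have "r j {x} = 1" "r j {u} = 1" using carries x tr unfolding carries_def by auto
  moreover have "r j {x, u} \<le> r j {p, q, u, x}" using E by (intro matroid_rank_mono[OF matroid[OF j]]) auto
  then have "r j {x, u} \<le> 1" using carried_unit_triangle_rank_le_1[OF tri x(1) carries] by simp
  ultimately have "1 \<le> defect (r j) {x, u}" using defect_pair_pos_iff[OF matroid[OF j] E(4,3) nm(6)] by simp
  then obtain g where g: "g \<in> {1..n}" "x \<in> X g" "u \<in> X g" "t g = 1"
    using defect_pair_pos_imp_hyperedge[OF j E(4,3) nm(6)] by blast
  have "g \<notin> {h1, h2, h3}" using g nm by auto
  have other: "\<exists>m<k. m \<noteq> j \<and> 1 \<le> defect (r m) {a, b, u}"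
    if "a \<in> E" "b \<in> E" and tri3: "{ia, ib, ic} \<subseteq> {1..n}" "card {ia, ib, ic} = 3" "t ia = 1" "t ib = 1"
      "t ic = 1" "distinct [a, b, u]" "{a, b} \<subseteq> X ia" "{a, u} \<subseteq> X ib" "{b, u} \<subseteq> X ic"
    for a b ia ib ic
  proof (rule ex_other_defect_pos_triple[OF j _ _ _ \<open>r j {u} = 1\<close>])
    show "{a, b, u} \<subseteq> E" "card {a, b, u} = 3" "u \<in> {a, b, u}" using that E by auto
    show "3 \<le> total_excess {a, b, u}" by (rule total_excess_triple_ge_3[OF tri3])
  qed
  have "\<exists>m<k. m \<noteq> j \<and> 1 \<le> defect (r m) {p, q, u}"
    by (rule other[where ia=h1 and ib=h2 and ic=h3]) (use E tr in auto)
  moreover have "\<exists>m<k. m \<noteq> j \<and> 1 \<le> defect (r m) {p, x, u}"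
    by (rule other[where ia=h1 and ib=h2 and ic=g]) (use E tr x nm g \<open>g \<notin> {h1, h2, h3}\<close> in auto)
  moreover have "\<exists>m<k. m \<noteq> j \<and> 1 \<le> defect (r m) {q, x, u}"
    by (rule other[where ia=h1 and ib=h3 and ic=g]) (use E tr x nm g \<open>g \<notin> {h1, h2, h3}\<close> in auto)
  ultimately show ?thesis by blast
qed

lemma defect_other_unit_triangle_le_1:
  assumes tri: "unit_triangle h1 h2 h3 p q u" and x: "x \<in> X h1" "x \<noteq> p" "x \<noteq> q"
    and carries: "carries h1 j" "carries h2 j" and m: "m < k" "m \<noteq> j"
    and Q: "Qa \<union> Qb = {p, q, u, x}" "Qa \<inter> Qb = {a, b}" "a \<noteq> b"
  shows "defect (r m) Qa + defect (r m) Qb \<le> 1"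
proof -
  note nm = unit_triangle_nonmem[OF tri x]
  have tr: "h1 \<in> {1..n}" "h2 \<in> {1..n}" "t h1 = 1" "p \<in> X h1" "q \<in> X h1" "u \<in> X h2"
    "distinct [p, q, u]"
    using tri by (simp_all add: unit_triangle_def)
  have j: "j < k" using carries(1) by (simp add: carries_def)
  have E: "p \<in> E" "q \<in> E" "u \<in> E" "x \<in> E" using tr x hyperedge_subset by blast+
  have nonloop: "r j {e} = 1" if "e \<in> {p, q, u, x}" for e
    using that x tr carries unfolding carries_def by auto
  have AE: "{p, q, u, x} \<subseteq> E" using E by auto
  note defect_j = defect_ge_card_minus_1[OF matroid[OF j] _ AE nonloop carried_unit_triangle_rank_le_1[OF tri x(1) carries]]
  have ab: "{a, b} \<subseteq> {p, q, u, x}" using Q(2) Q(1) by blast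
  then have "a \<in> E" "b \<in> E" using AE by auto
  then have "(\<Sum>i<k. defect (r i) {a, b}) \<le> defect (r j) {a, b}"
    using sum_defect_pair_le_1[of a b] defect_j[OF ab] Q(3) by simp
  then have "defect (r m) {a, b} = 0" using defect_other_eq_0[OF j m] ab AE by blast
  moreover have "defect (r m) {p, q, x} = 0"
  proof (rule defect_other_eq_0[OF j m])
    have "card {p, q, x} = 3" using tr x by auto
    then show "(\<Sum>i<k. defect (r i) {p, q, x}) \<le> defect (r j) {p, q, x}"
      using sum_defect_small[of "{p, q, x}"] total_excess_subset_hyperedge[of h1 "{p, q, x}"]
        defect_j[of "{p, q, x}"] tr x E by simp
  qed (use E in auto)
  moreover have "Qa \<union> Qb = insert u {p, q, x}" "insert u {p, q, x} \<subseteq> E" "u \<notin> {p, q, x}"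
    using Q(1) E tr nm by auto
  ultimately show ?thesis
    using defect_add_le_1_of_Un_eq_insert[OF matroid[OF m(1)], of "{p, q, x}" u Qa Qb] Q(2) by simp
qed

text \<open>Each of the triples \<open>{p, q, u}\<close>, \<open>{p, x, u}\<close>, \<open>{q, x, u}\<close> has total excess \<open>3\<close> but
  defect at most \<open>2\<close> in \<open>j\<close>, so some other matroid finds it dependent; the three
  matroids are distinct, which pushes the total defect of \<open>{p, q, u, x}\<close> to \<open>6\<close>,
  while condition (b) bounds it by \<open>5\<close>.\<close>
lemma not_carries_unit_triangle:
  assumes tri: "unit_triangle h1 h2 h3 p q u" and x: "x \<in> X h1" "x \<noteq> p" "x \<noteq> q"
    and carries: "carries h1 j" "carries h2 j"
  shows False
proof -
  define A where "A = {p, q, u, x}"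
  note nm = unit_triangle_nonmem[OF tri x]
  have tr: "t h1 = 1" "p \<in> X h1 \<inter> X h2" "q \<in> X h1 \<inter> X h3" "u \<in> X h2 \<inter> X h3" "distinct [p, q, u]"
    using tri by (simp_all add: unit_triangle_def)
  have j: "j < k" using carries(1) by (simp add: carries_def)
  have AE: "A \<subseteq> E" using tr x tri hyperedge_subset unfolding A_def unit_triangle_def by auto
  obtain m1 m2 m3 where
    m1: "m1 < k" "m1 \<noteq> j" "1 \<le> defect (r m1) {p, q, u}" and
    m2: "m2 < k" "m2 \<noteq> j" "1 \<le> defect (r m2) {p, x, u}" and
    m3: "m3 < k" "m3 \<noteq> j" "1 \<le> defect (r m3) {q, x, u}"
    using unit_triangle_other_owners[OF tri x carries] by blast
  note apart = defect_other_unit_triangle_le_1[OF tri x carries]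
  have "{p, q, u} \<union> {p, x, u} = A" "{p, q, u} \<inter> {p, x, u} = {p, u}"
    "{p, q, u} \<union> {q, x, u} = A" "{p, q, u} \<inter> {q, x, u} = {q, u}"
    "{p, x, u} \<union> {q, x, u} = A" "{p, x, u} \<inter> {q, x, u} = {x, u}"
    using tr x by (auto simp: A_def)
  then have "m1 \<noteq> m2" "m1 \<noteq> m3" "m2 \<noteq> m3"
    using apart[OF m1(1,2), of "{p, q, u}" "{p, x, u}" p u] apart[OF m1(1,2), of "{p, q, u}" "{q, x, u}" q u]
      apart[OF m2(1,2), of "{p, x, u}" "{q, x, u}" x u] m1 m2 m3 tr nm
    by (auto simp: A_def)
  moreover have "1 \<le> defect (r m) A" if "m < k" "1 \<le> defect (r m) Q" "Q \<subseteq> A" for m Q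
    using defect_mono[OF matroid[OF that(1)] that(3)] AE that(2) by (simp add: A_def)
  then have "1 \<le> defect (r m1) A" "1 \<le> defect (r m2) A" "1 \<le> defect (r m3) A"
    using m1 m2 m3 by (auto simp: A_def)
  moreover have "3 \<le> defect (r j) A"
    using defect_ge_card_minus_1[OF matroid[OF j] _ AE, of A] carried_unit_triangle_rank_le_1[OF tri x(1) carries]
      carries tr x nm unfolding A_def carries_def by auto
  ultimately have "6 \<le> (\<Sum>m\<in>{j, m1, m2, m3}. defect (r m) A)"
    using m1(2) m2(2) m3(2) by simp
  also have "\<dots> \<le> (\<Sum>m<k. defect (r m) A)" using j m1 m2 m3 AE by (intro sum_defect_ge) auto
  also have "\<dots> = total_excess A"
    using sum_defect[OF AE] cond_b_unit_triangle[OF tri x] by (simp add: A_def)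
  also have "\<dots> \<le> 5" using total_excess_unit_triangle_le[OF tri x] by (simp add: A_def)
  finally show False by simp
qed

lemma carries_pair:
  assumes "carries h j" "t h = 1" "a \<in> X h" "b \<in> X h" "a \<noteq> b"
  shows "1 \<le> defect (r j) {a, b}"
  using assms unfolding carries_def by auto

lemma ex_carried_unit_edge:
  assumes "j < k" "a \<in> E" "b \<in> E" "a \<noteq> b" "1 \<le> defect (r j) {a, b}"
  shows "\<exists>g\<in>{1..n}. a \<in> X g \<and> b \<in> X g \<and> t g = 1 \<and> carries g j"
proof -
  obtain g where g: "g \<in> {1..n}" "a \<in> X g" "b \<in> X g" "t g = 1"
    using defect_pair_pos_imp_hyperedge[OF assms] by blast
  have "card {a, b} \<le> card (X g)" using g finite_hyperedge by (intro card_mono) auto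
  then obtain j' where j': "carries g j'" using ex_carries[OF g(1)] g(4) assms(4) by auto
  then have "j' = j"
    using defect_pair_unique[OF _ assms(1-4) _ assms(5)] carries_pair[OF j' g(4,2,3) assms(4)]
    by (simp add: carries_def)
  with g j' show ?thesis by blast
qed

text \<open>Two carried hyperedges with \<open>t = 1\<close> through \<open>e\<close>, say \<open>{e, a, \<dots>}\<close> and \<open>{e, b, \<dots>}\<close>,
  make \<open>a\<close> and \<open>b\<close> parallel, so a third such hyperedge contains \<open>a\<close> and \<open>b\<close> and is carried
  by the same matroid. Either one of the three has a further element, contradicting
  \<open>not_carries_unit_triangle\<close>, or they form a triangle of \<open>2\<close>-element hyperedges,
  excluded by (H3).\<close>
lemma not_carries_meeting_unit_edges:
  assumes hh: "h \<in> {1..n}" "h' \<in> {1..n}" "h \<noteq> h'" "t h = 1" "t h' = 1"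
    and card: "2 \<le> card (X h)" "2 \<le> card (X h')"
    and e: "e \<in> X h" "e \<in> X h'" and carries: "carries h j" "carries h' j"
  shows False
proof -
  have j: "j < k" using carries(1) by (simp add: carries_def)
  obtain a b where a: "a \<in> X h" "a \<noteq> e" and b: "b \<in> X h'" "b \<noteq> e"
    using ex_other_elem[OF card(1)] ex_other_elem[OF card(2)] by blast
  have "a \<notin> X h'" "b \<notin> X h" using hyperedges_share_le_one[OF hh(1-3)] a b e by blast+
  then have ab: "a \<noteq> b" using a by blast
  have E: "a \<in> E" "b \<in> E" "e \<in> E" using a b e hh hyperedge_subset by blast+
  have "1 \<le> defect (r j) {a, b}"
    using defect_pair_trans[OF matroid[OF j] E(1,3,2) a(2) not_sym[OF b(2)] ab]
      carries_pair[OF carries(1) hh(4) a(1) e(1) a(2)] carries_pair[OF carries(2) hh(5) e(2) b(1)] b(2)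
    by simp
  then obtain g where g: "g \<in> {1..n}" "a \<in> X g" "b \<in> X g" "t g = 1" and carries_g: "carries g j"
    using ex_carried_unit_edge[OF j E(1,2) ab] by blast
  have "g \<noteq> h" "g \<noteq> h'" using g \<open>a \<notin> X h'\<close> \<open>b \<notin> X h\<close> by auto
  have tri: "unit_triangle h h' g e a b" "unit_triangle h' h g e b a" "unit_triangle g h h' a b e"
    unfolding unit_triangle_def using hh g a b e ab \<open>g \<noteq> h\<close> \<open>g \<noteq> h'\<close> by auto
  consider (tail) x where "x \<in> X h" "x \<noteq> e" "x \<noteq> a" | (tail') x where "x \<in> X h'" "x \<noteq> e" "x \<noteq> b"
    | (tail'') x where "x \<in> X g" "x \<noteq> a" "x \<noteq> b" | (pairs) "X h = {e, a}" "X h' = {e, b}" "X g = {a, b}"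
    using a b e g by blast
  then show False
  proof cases
    case tail
    then show False using not_carries_unit_triangle[OF tri(1) _ _ _ carries] by blast
  next
    case tail'
    then show False using not_carries_unit_triangle[OF tri(2) _ _ _ carries(2,1)] by blast
  next
    case tail''
    then show False using not_carries_unit_triangle[OF tri(3) _ _ _ carries_g carries(1)] by blast
  next
    case pairs
    then show False using H3 hh g E a(2) b(2) ab unfolding H3_def by (metis image_eqI)
  qed
qed

section \<open>The coloring by carriers\<close>

definition carrier :: "nat \<Rightarrow> nat" where
  "carrier h = (SOME j. carries h j)"

lemma carries_carrier: "h \<in> {1..n} \<Longrightarrow> t h + 1 \<le> card (X h) \<Longrightarrow> carries h (carrier h)"
  unfolding carrier_def using ex_carries by (metis someI_ex)

lemma card_le_defect_of_carried_unit_edges: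
  assumes m: "m < k" and "finite G" "A \<subseteq> E"
    and G: "\<And>g. g \<in> G \<Longrightarrow> g \<in> {1..n} \<and> t g = 1 \<and> 2 \<le> card (A \<inter> X g) \<and> carries g m"
  shows "int (card G) \<le> defect (r m) A"
proof -
  have fA: "finite A" using assms(3) finite_subset_E by blast
  have card_Xg: "2 \<le> card (X g)" if "g \<in> G" for g
    using G[OF that] card_mono[of "X g" "A \<inter> X g"] finite_hyperedge by fastforce
  have "1 \<le> defect (r m) (A \<inter> X g)" if g: "g \<in> G" for g
  proof -
    obtain Q where Q: "Q \<subseteq> A \<inter> X g" "card Q = 2" using G[OF g] by (meson obtain_subset_with_card_n)
    then obtain a b where "Q = {a, b}" "a \<noteq> b" by (meson card_2_iff)
    then have "1 \<le> defect (r m) Q" using carries_pair[of g m a b] G[OF g] Q(1) by auto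
    also have "\<dots> \<le> defect (r m) (A \<inter> X g)"
      using Q(1) fA assms(3) by (intro defect_mono[OF matroid[OF m]]) auto
    finally show ?thesis .
  qed
  then have "int (card G) \<le> (\<Sum>g\<in>G. defect (r m) (A \<inter> X g))"
    using sum_mono[of G "\<lambda>_. 1::int"] by simp
  also have "\<dots> \<le> defect (r m) A"
  proof (rule defect_UN_disjoint_ge[OF matroid[OF m] assms(2) fA assms(3)])
    fix g g' assume gg: "g \<in> G" "g' \<in> G" "g \<noteq> g'"
    show "A \<inter> X g \<inter> (A \<inter> X g') = {}"
      using not_carries_meeting_unit_edges[of g g'] G[OF gg(1)] G[OF gg(2)] card_Xg gg by blast
  qed blast
  finally show ?thesis .
qed

lemma card_le_sum_other_defect:
  assumes j: "j < k" and "finite G" "A \<subseteq> E"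
    and G: "\<And>g. g \<in> G \<Longrightarrow> g \<in> {1..n} \<and> t g = 1 \<and> 2 \<le> card (A \<inter> X g) \<and> carries g (carrier g) \<and> carrier g \<noteq> j"
  shows "int (card G) \<le> (\<Sum>m\<in>{..<k} - {j}. defect (r m) A)"
proof -
  have "carrier ` G \<subseteq> {..<k} - {j}" using G by (auto simp: carries_def)
  then have "(\<Sum>m\<in>{..<k} - {j}. \<Sum>g\<in>{g \<in> G. carrier g = m}. 1::int) = (\<Sum>g\<in>G. 1)"
    using assms(2) by (intro sum.group) auto
  then have "int (card G) = (\<Sum>m\<in>{..<k} - {j}. int (card {g \<in> G. carrier g = m}))" by simp
  also have "\<dots> \<le> (\<Sum>m\<in>{..<k} - {j}. defect (r m) A)"
    using G assms(2,3) by (intro sum_mono card_le_defect_of_carried_unit_edges) auto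
  finally show ?thesis .
qed

lemma carried_meeting_edges_defect_pos:
  assumes h: "h \<in> {1..n}" "h' \<in> {1..n}" and e: "e \<in> X h" "e \<in> X h'"
    and carries: "carries h j" "carries h' j"
    and T: "T \<subseteq> X h - X h'" "card T = t h" and T': "T' \<subseteq> X h' - X h" "card T' = t h'"
  shows "1 \<le> defect (r j) (T \<union> T')"
proof -
  have j: "j < k" using carries(1) by (simp add: carries_def)
  have E: "insert e (T \<union> T') \<subseteq> E" using h e T T' hyperedge_subset by blast
  then have "finite T" "finite T'" using finite_subset_E by auto
  then show ?thesis
  proof (rule defect_Un_pos[OF matroid[OF j] _ _ E])
    show "T \<inter> T' = {}" using T T' by blast
    show "\<And>x. x \<in> T \<union> T' \<Longrightarrow> r j {x} = 1" "r j {e} = 1"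
      using carries e T T' unfolding carries_def by auto
    show "r j (insert e T) \<le> int (card T)" "r j (insert e T') \<le> int (card T')"
      using carries_rank_le[OF h(1) carries(1), of "insert e T"] carries_rank_le[OF h(2) carries(2), of "insert e T'"]
        T T' e by auto
  qed
qed

text \<open>Pick \<open>T \<subseteq> X h - {e}\<close> and \<open>T' \<subseteq> X h' - {e}\<close> of sizes \<open>t h\<close> and \<open>t h'\<close>. Through \<open>e\<close>
  the matroid \<open>j\<close> finds \<open>T \<union> T'\<close> dependent, and every linking edge \<open>g\<close> makes the pair
  \<open>(T \<union> T') \<inter> X g\<close> dependent in its own carrier, which differs from \<open>j\<close>. So the
  total defect of \<open>T \<union> T'\<close> exceeds the number of linking edges, contradicting (d).\<close>
lemma not_carries_meeting_edges:
  assumes h: "h \<in> {1..n}" "h' \<in> {1..n}" "h \<noteq> h'" "t h + 1 \<le> card (X h)" "t h' + 1 \<le> card (X h')"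
    and e: "e \<in> X h" "e \<in> X h'" and carries: "carries h j" "carries h' j"
    and unit_free: "\<And>g. g \<in> {1..n} \<Longrightarrow> g \<noteq> h \<Longrightarrow> t g = 1 \<Longrightarrow> 2 \<le> card (X g) \<Longrightarrow>
      X g \<inter> X h \<noteq> {} \<Longrightarrow> \<not> carries g j"
  shows False
proof -
  have j: "j < k" using carries(1) by (simp add: carries_def)
  have meet: "X h \<inter> X h' = {e}" using hyperedges_share_le_one[OF h(1-3)] e by blast
  obtain T where T: "T \<subseteq> X h - {e}" "card T = t h"
    using h(4) e finite_hyperedge[OF h(1)] by (metis obtain_subset_with_card_n card_Diff_singleton add_le_imp_le_diff)
  obtain T' where T': "T' \<subseteq> X h' - {e}" "card T' = t h'"
    using h(5) e finite_hyperedge[OF h(2)] by (metis obtain_subset_with_card_n card_Diff_singleton add_le_imp_le_diff)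
  have TT: "T \<subseteq> X h - X h'" "T' \<subseteq> X h' - X h" using T T' meet by auto
  define A where "A = T \<union> T'"
  define G where "G = linking_edges T T'"
  have AE: "A \<subseteq> E" using TT h hyperedge_subset unfolding A_def by blast
  have "1 \<le> defect (r j) A"
    unfolding A_def using carried_meeting_edges_defect_pos[OF h(1,2) e carries TT(1) T(2) TT(2) T'(2)] .
  moreover have "int (card G) \<le> (\<Sum>m\<in>{..<k} - {j}. defect (r m) A)"
  proof (rule card_le_sum_other_defect[OF j _ AE])
    show "finite G" by (simp add: G_def linking_edges_def)
    fix g assume "g \<in> G"
    then have g: "g \<in> {1..n}" "t g = 1" "card (A \<inter> X g) = 2" "T' \<inter> X g \<noteq> {}" "T \<inter> X g \<noteq> {}"
      using card_Int_linking_edge[OF h(1,2) TT] unfolding G_def A_def linking_edges_def by auto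
    then have "2 \<le> card (X g)" using card_mono[of "X g" "A \<inter> X g"] finite_hyperedge by fastforce
    moreover have "g \<noteq> h" "X g \<inter> X h \<noteq> {}" using g(4,5) TT by blast+
    ultimately show "g \<in> {1..n} \<and> t g = 1 \<and> 2 \<le> card (A \<inter> X g) \<and> carries g (carrier g) \<and> carrier g \<noteq> j"
      using carries_carrier[OF g(1)] unit_free[OF g(1)] g by auto
  qed
  ultimately have "1 + int (card G) \<le> (\<Sum>m<k. defect (r m) A)"
    using j by (simp add: sum.remove)
  also have "\<dots> = total_excess A"
    using sum_defect[OF AE] cond_d_Un[OF h(1,2) TT] e T T' by (auto simp: A_def)
  also have "\<dots> \<le> int (card G)"
    using total_excess_le_card_linking_edges[OF h(1,2) TT] T T' by (simp add: A_def G_def)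
  finally show False by simp
qed

lemma not_carries_meeting_unit_large:
  assumes h: "h \<in> {1..n}" "h' \<in> {1..n}" "h \<noteq> h'" "t h = 1" "2 \<le> card (X h)" "t h' \<noteq> 1"
    and meet: "X h \<inter> X h' \<noteq> {}" and carries: "carries h j" "carries h' j"
  shows False
proof -
  obtain e where e: "e \<in> X h" "e \<in> X h'" using meet by blast
  show False
  proof (rule not_carries_meeting_edges[OF h(1-3) _ _ e carries])
    show "t h + 1 \<le> card (X h)" "t h' + 1 \<le> card (X h')" using h t_less_card[OF h(2,6)] by simp_all
  next
    fix g assume g: "g \<in> {1..n}" "g \<noteq> h" "t g = 1" "2 \<le> card (X g)" "X g \<inter> X h \<noteq> {}"
    then obtain e' where "e' \<in> X g" "e' \<in> X h" by blast
    then show "\<not> carries g j"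
      using not_carries_meeting_unit_edges[OF g(1) h(1) g(2) g(3) h(4) g(4) h(5)] carries(1) by blast
  qed
qed

lemma not_carries_meeting_large_edges:
  assumes h: "h \<in> {1..n}" "h' \<in> {1..n}" "h \<noteq> h'" "t h \<noteq> 1" "t h' \<noteq> 1"
    and meet: "X h \<inter> X h' \<noteq> {}" and carries: "carries h j" "carries h' j"
  shows False
proof -
  obtain e where e: "e \<in> X h" "e \<in> X h'" using meet by blast
  show False
  proof (rule not_carries_meeting_edges[OF h(1-3) _ _ e carries])
    show "t h + 1 \<le> card (X h)" "t h' + 1 \<le> card (X h')"
      using t_less_card[OF h(1,4)] t_less_card[OF h(2,5)] by simp_all
  next
    fix g assume g: "g \<in> {1..n}" "g \<noteq> h" "t g = 1" "2 \<le> card (X g)" "X g \<inter> X h \<noteq> {}"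
    then show "\<not> carries g j"
      using not_carries_meeting_unit_large[OF g(1) h(1) g(2) g(3) g(4) h(4) g(5) _ carries(1)] by blast
  qed
qed

lemma carrier_ne:
  assumes h: "h \<in> {1..n}" "h' \<in> {1..n}" "h \<noteq> h'" "t h + 1 \<le> card (X h)" "t h' + 1 \<le> card (X h')"
    and meet: "X h \<inter> X h' \<noteq> {}"
  shows "carrier h \<noteq> carrier h'"
proof
  assume eq: "carrier h = carrier h'"
  have carries: "carries h (carrier h)" "carries h' (carrier h)"
    using carries_carrier h eq by metis+
  have meet': "X h' \<inter> X h \<noteq> {}" using meet by blast
  consider "t h = 1" "t h' = 1" | "t h = 1" "t h' \<noteq> 1" | "t h \<noteq> 1" "t h' = 1" | "t h \<noteq> 1" "t h' \<noteq> 1"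
    by blast
  then show False
  proof cases
    case 1
    with meet obtain e where "e \<in> X h" "e \<in> X h'" by blast
    with 1 show False using not_carries_meeting_unit_edges[OF h(1-3)] h(4,5) carries by simp
  next
    case 2
    then show False using not_carries_meeting_unit_large[OF h(1-3)] h(4) meet carries by simp
  next
    case 3
    then show False using not_carries_meeting_unit_large[OF h(2,1) not_sym[OF h(3)]] h(5) meet' carries by simp
  next
    case 4
    then show False using not_carries_meeting_large_edges[OF h(1-3)] meet carries by simp
  qed
qed

text \<open>A hyperedge \<open>X h = {a}\<close> (then \<open>t h = 1\<close>) is carried by none of the matroids in
  particular; it gets one of the \<open>weight a\<close> matroids in which \<open>a\<close> is a non-loop that is
  not the carrier of one of the \<open>weight a - 1\<close> other hyperedges through \<open>a\<close>.\<close>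
definition color :: "nat \<Rightarrow> nat" where
  "color h = (if t h + 1 \<le> card (X h) then carrier h else
     (SOME j. j < k \<and> (\<forall>e\<in>X h. r j {e} = 1) \<and>
        (\<forall>g\<in>{1..n}. g \<noteq> h \<longrightarrow> X g \<inter> X h \<noteq> {} \<longrightarrow> j \<noteq> carrier g)))"

lemma ex_color_singleton:
  assumes h: "h \<in> {1..n}" "X h = {a}"
  shows "\<exists>j. j < k \<and> (\<forall>e\<in>X h. r j {e} = 1) \<and>
    (\<forall>g\<in>{1..n}. g \<noteq> h \<longrightarrow> X g \<inter> X h \<noteq> {} \<longrightarrow> j \<noteq> carrier g)"
proof -
  have aE: "a \<in> E" using hyperedge_subset h by blast
  define L where "L = {j \<in> {..<k}. r j {a} = 1}"
  define G where "G = {g \<in> {1..n}. g \<noteq> h \<and> a \<in> X g}"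
  have "G = {i \<in> {1..n}. a \<in> X i} - {h}" using h by (auto simp: G_def)
  then have "card G = weight n X a - 1" using h by (simp add: weight_def card_Diff_singleton)
  moreover have "1 \<le> weight n X a" using weight_pos h by simp
  moreover have "card (carrier ` G) \<le> card G" by (rule card_image_le) (simp add: G_def)
  ultimately have "card (carrier ` G) < card L" using card_nonloops_eq_weight[OF aE] by (simp add: L_def)
  then have "\<not> L \<subseteq> carrier ` G" using card_mono[of "carrier ` G" L] by (auto simp: G_def)
  then obtain j where "j \<in> L" "j \<notin> carrier ` G" by blast
  then show ?thesis using h by (auto simp: L_def G_def)
qed

lemma color_small:
  assumes "h \<in> {1..n}" "\<not> t h + 1 \<le> card (X h)"
  shows "color h < k" "\<And>e. e \<in> X h \<Longrightarrow> r (color h) {e} = 1"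
    and "\<And>g. g \<in> {1..n} \<Longrightarrow> g \<noteq> h \<Longrightarrow> X g \<inter> X h \<noteq> {} \<Longrightarrow> color h \<noteq> carrier g"
proof -
  obtain a where "X h = {a}" using small_hyperedge assms by fastforce
  then have "\<exists>j. j < k \<and> (\<forall>e\<in>X h. r j {e} = 1) \<and>
      (\<forall>g\<in>{1..n}. g \<noteq> h \<longrightarrow> X g \<inter> X h \<noteq> {} \<longrightarrow> j \<noteq> carrier g)"
    using ex_color_singleton assms by blast
  then have "color h < k \<and> (\<forall>e\<in>X h. r (color h) {e} = 1) \<and>
      (\<forall>g\<in>{1..n}. g \<noteq> h \<longrightarrow> X g \<inter> X h \<noteq> {} \<longrightarrow> color h \<noteq> carrier g)"
    unfolding color_def using assms(2) by (simp only: if_False) (rule someI_ex)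
  then show "color h < k" "\<And>e. e \<in> X h \<Longrightarrow> r (color h) {e} = 1"
    and "\<And>g. g \<in> {1..n} \<Longrightarrow> g \<noteq> h \<Longrightarrow> X g \<inter> X h \<noteq> {} \<Longrightarrow> color h \<noteq> carrier g"
    by blast+
qed

lemma carries_color: "h \<in> {1..n} \<Longrightarrow> t h + 1 \<le> card (X h) \<Longrightarrow> carries h (color h)"
  unfolding color_def using carries_carrier by simp

lemma color_less: "h \<in> {1..n} \<Longrightarrow> color h < k"
  using color_small(1) carries_color by (cases "t h + 1 \<le> card (X h)") (auto simp: carries_def)

lemma color_nonloop: "h \<in> {1..n} \<Longrightarrow> e \<in> X h \<Longrightarrow> r (color h) {e} = 1"
  using color_small(2) carries_color by (cases "t h + 1 \<le> card (X h)") (auto simp: carries_def)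

lemma color_ne:
  assumes h: "h \<in> {1..n}" "h' \<in> {1..n}" "h \<noteq> h'" and meet: "X h \<inter> X h' \<noteq> {}"
  shows "color h \<noteq> color h'"
proof (cases "t h + 1 \<le> card (X h)"; cases "t h' + 1 \<le> card (X h')")
  assume "t h + 1 \<le> card (X h)" "t h' + 1 \<le> card (X h')"
  then show ?thesis using carrier_ne[OF h] meet by (simp add: color_def)
next
  assume "t h + 1 \<le> card (X h)" "\<not> t h' + 1 \<le> card (X h')"
  then show ?thesis using color_small(3)[OF h(2) _ h(1)] h(3) meet by (auto simp: color_def)
next
  assume "\<not> t h + 1 \<le> card (X h)" "t h' + 1 \<le> card (X h')"
  then show ?thesis using color_small(3)[OF h(1) _ h(2)] h(3) meet by (auto simp: color_def)
next
  assume "\<not> t h + 1 \<le> card (X h)" "\<not> t h' + 1 \<le> card (X h')"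
  then have "card (X h) \<le> t h" "card (X h') \<le> t h'" by simp_all
  then obtain a b where "X h = {a}" "X h' = {b}"
    using small_hyperedge(2)[OF h(1)] small_hyperedge(2)[OF h(2)] by blast
  then show ?thesis using meet hyperedge_inj[OF h(1,2)] h(3) by auto
qed

lemma rank_E_ge_2_of_color_class:
  assumes h: "h \<in> {1..n}" "h' \<in> {1..n}" "h \<noteq> h'" and c: "color h = j" "color h' = j"
  shows "2 \<le> r j E"
proof -
  have j: "j < k" using color_less h c by blast
  obtain a b where ab: "a \<in> X h" "b \<in> X h'" using hyperedge_nonempty h by blast
  have "X h \<inter> X h' = {}" using color_ne[OF h] c by auto
  then have "a \<noteq> b" "b \<notin> X h" using ab by auto
  have E: "a \<in> E" "b \<in> E" using hyperedge_subset h ab by blast+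
  have "r j {a} = 1" "r j {b} = 1" using color_nonloop[OF h(1) ab(1)] color_nonloop[OF h(2) ab(2)] c by simp_all
  have "\<not> r j {a, b} \<le> 1"
  proof
    assume "r j {a, b} \<le> 1"
    then have pair: "1 \<le> defect (r j) {a, b}"
      using defect_pair_pos_iff[OF matroid[OF j] E \<open>a \<noteq> b\<close>] \<open>r j {a} = 1\<close> \<open>r j {b} = 1\<close> by simp
    then obtain g where g: "g \<in> {1..n}" "a \<in> X g" "b \<in> X g" "t g = 1"
      using defect_pair_pos_imp_hyperedge[OF j E \<open>a \<noteq> b\<close>] by blast
    have "card {a, b} \<le> card (X g)" using g finite_hyperedge by (intro card_mono) auto
    then have "carries g (color g)" using carries_color[OF g(1)] g(4) \<open>a \<noteq> b\<close> by simp
    then have "color g = j"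
      using defect_pair_unique[OF _ j E \<open>a \<noteq> b\<close> _ pair] carries_pair[of g "color g" a b] g \<open>a \<noteq> b\<close>
      by (simp add: carries_def)
    moreover have "color g \<noteq> color h"
      using color_ne[OF g(1) h(1)] g \<open>b \<notin> X h\<close> ab(1) by blast
    ultimately show False using c by simp
  qed
  then have "2 \<le> r j {a, b}" using matroid_rank_le_card[OF matroid[OF j], of "{a, b}"] E by simp
  also have "\<dots> \<le> r j E" using E by (intro matroid_rank_mono[OF matroid[OF j]]) auto
  finally show ?thesis .
qed

lemma rank_E_ge_color_class:
  assumes j: "j < k"
  shows "(if card {h \<in> {1..n}. color h = j} = 1 then 1 else 0)
      + 2 * (if 2 \<le> card {h \<in> {1..n}. color h = j} then 1 else 0) \<le> r j E"
proof -
  consider "card {h \<in> {1..n}. color h = j} = 0" | "card {h \<in> {1..n}. color h = j} = 1"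
    | "2 \<le> card {h \<in> {1..n}. color h = j}" by linarith
  then show ?thesis
  proof cases
    case 1
    then show ?thesis unfolding 1 using matroid_rank_nonneg[OF matroid[OF j], of E] by simp
  next
    case 2
    then obtain h where "{h \<in> {1..n}. color h = j} = {h}" by (rule card_1_singletonE)
    then have h: "h \<in> {1..n}" "color h = j" by auto
    obtain e where e: "e \<in> X h" using hyperedge_nonempty h by blast
    have "r j {e} \<le> r j E" using e hyperedge_subset h by (intro matroid_rank_mono[OF matroid[OF j]]) auto
    then show ?thesis using 2 color_nonloop[OF h(1) e] h by simp
  next
    case 3
    then obtain S where "S \<subseteq> {h \<in> {1..n}. color h = j}" "card S = 2" by (meson obtain_subset_with_card_n)
    then obtain h h' where "h \<in> {1..n}" "h' \<in> {1..n}" "h \<noteq> h'" "color h = j" "color h' = j"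
      by (auto simp: card_2_iff)
    then show ?thesis using rank_E_ge_2_of_color_class 3 by simp
  qed
qed

lemma ex_proper_coloring_le_sum_rank:
  "\<exists>c. proper_coloring n X k c \<and> int (c_one n k c) + 2 * int (c_two_plus n k c) \<le> (\<Sum>j<k. r j E)"
proof -
  define c where "c h = color h + 1" for h
  define N where "N j = card {h \<in> {1..n}. color h = j}" for j
  have "proper_coloring n X k c"
    unfolding proper_coloring_def c_def using color_less color_ne by fastforce
  moreover have "c_one n k c = card {j \<in> {..<k}. N j = 1}" "c_two_plus n k c = card {j \<in> {..<k}. 2 \<le> N j}"
    unfolding c_one_def c_two_plus_def card_filter_atLeastAtMost_1[of k] by (simp_all add: c_def N_def)
  moreover have "int (card {j \<in> {..<k}. N j = 1}) = (\<Sum>j<k. if N j = 1 then 1 else 0)"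
    "int (card {j \<in> {..<k}. 2 \<le> N j}) = (\<Sum>j<k. if 2 \<le> N j then 1 else 0)"
    by (simp_all add: sum.inter_filter[symmetric])
  then have "int (card {j \<in> {..<k}. N j = 1}) + 2 * int (card {j \<in> {..<k}. 2 \<le> N j})
      = (\<Sum>j<k. (if N j = 1 then 1 else 0) + 2 * (if 2 \<le> N j then 1 else 0))"
    by (simp add: sum.distrib sum_distrib_left)
  moreover have "\<dots> \<le> (\<Sum>j<k. r j E)"
    using rank_E_ge_color_class unfolding N_def by (intro sum_mono) auto
  ultimately show ?thesis by auto
qed

text \<open>The coloring is injective on the \<open>weight e\<close> hyperedges through \<open>e\<close> and maps them
  to the \<open>weight e\<close> matroids in which \<open>e\<close> is a non-loop, hence onto them.\<close>
lemma ex_color_of_nonloop: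
  assumes j: "j < k" and e: "e \<in> E" "r j {e} = 1"
  shows "\<exists>h\<in>{1..n}. e \<in> X h \<and> color h = j"
proof -
  define C where "C = {h \<in> {1..n}. e \<in> X h}"
  define L where "L = {m \<in> {..<k}. r m {e} = 1}"
  have "inj_on color C" using color_ne by (auto simp: C_def intro!: inj_onI)
  then have "card (color ` C) = card L"
    using card_nonloops_eq_weight[OF e(1)] by (simp add: card_image C_def L_def weight_def)
  moreover have "color ` C \<subseteq> L" using color_less color_nonloop by (auto simp: C_def L_def)
  ultimately have "color ` C = L" by (intro card_subset_eq) (auto simp: L_def)
  moreover have "j \<in> L" using j e by (simp add: L_def)
  ultimately show ?thesis by (auto simp: C_def)
qed

lemma rank_outside_color_class:
  assumes j: "j < k" and A: "A \<subseteq> E" "A \<inter> (\<Union>h\<in>{h \<in> {1..n}. color h = j}. X h) = {}"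
  shows "r j A \<le> 0"
proof -
  have "r j {e} = 0" if e: "e \<in> A" for e
  proof -
    have "e \<in> E" "\<not> (\<exists>h\<in>{1..n}. e \<in> X h \<and> color h = j)" using e A by blast+
    then show ?thesis using matroid_rank_singleton[OF matroid[OF j], of e] ex_color_of_nonloop[OF j, of e] by blast
  qed
  moreover have "finite A" using A finite_subset_E by blast
  ultimately show ?thesis using matroid_rank_le_sum_singletons[OF matroid[OF j], of A] A by simp
qed

lemma rank_Int_le_uniform_rank:
  assumes h: "h \<in> {1..n}" and A: "A \<subseteq> E"
  shows "r (color h) (A \<inter> X h) \<le> uniform_rank (t h) (X h) A"
proof -
  have j: "color h < k" using color_less[OF h] .
  have "r (color h) (A \<inter> X h) \<le> int (card (A \<inter> X h))"
    using A by (intro matroid_rank_le_card[OF matroid[OF j]]) auto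
  moreover have "r (color h) (A \<inter> X h) \<le> int (t h)"
  proof (cases "t h + 1 \<le> card (X h)")
    case True
    then show ?thesis using carries_rank_le[OF h carries_color[OF h True]] by auto
  next
    case False
    then have "card (A \<inter> X h) \<le> t h" using card_mono[OF finite_hyperedge[OF h], of "A \<inter> X h"] by auto
    then show ?thesis using \<open>r (color h) (A \<inter> X h) \<le> int (card (A \<inter> X h))\<close> by simp
  qed
  ultimately show ?thesis by (simp add: uniform_rank_def)
qed

lemma rank_le_color_class:
  assumes j: "j < k" and A: "A \<subseteq> E"
  shows "r j A \<le> (\<Sum>h\<in>{h \<in> {1..n}. color h = j}. uniform_rank (t h) (X h) A)"
proof -
  define C where "C = {h \<in> {1..n}. color h = j}"
  define U where "U = (\<Union>h\<in>C. X h)"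
  have "r j A = r j ((A \<inter> U) \<union> (A - U))" by (simp add: Int_Diff_Un)
  also have "\<dots> \<le> r j (A \<inter> U) + r j (A - U)"
    using A by (intro matroid_rank_Un_le[OF matroid[OF j]]) auto
  also have "r j (A - U) \<le> 0"
    using A by (intro rank_outside_color_class[OF j]) (auto simp: U_def C_def)
  also have "A \<inter> U = (\<Union>h\<in>C. A \<inter> X h)" by (auto simp: U_def)
  also have "r j (\<Union>h\<in>C. A \<inter> X h) \<le> (\<Sum>h\<in>C. r j (A \<inter> X h))"
    using A by (intro matroid_rank_UN_le[OF matroid[OF j]]) (auto simp: C_def)
  also have "\<dots> \<le> (\<Sum>h\<in>C. uniform_rank (t h) (X h) A)"
    using rank_Int_le_uniform_rank A by (intro sum_mono) (auto simp: C_def)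
  finally show ?thesis by (simp add: C_def)
qed

lemma rank_eq_color_class:
  assumes all: "\<And>A. A \<subseteq> E \<Longrightarrow> (\<Sum>j<k. r j A) = rho n X t A" and j: "j < k" and A: "A \<subseteq> E"
  shows "r j A = (\<Sum>h\<in>{h \<in> {1..n}. color h = j}. uniform_rank (t h) (X h) A)"
proof -
  define M where "M j = (\<Sum>h\<in>{h \<in> {1..n}. color h = j}. uniform_rank (t h) (X h) A)" for j
  have "(\<Sum>j<k. M j) = (\<Sum>h\<in>{1..n}. uniform_rank (t h) (X h) A)"
    unfolding M_def by (rule sum.group) (use color_less in auto)
  also have "\<dots> = (\<Sum>j<k. r j A)" using all[OF A] by (simp add: rho_def uniform_rank_def)
  finally have "(\<Sum>j<k. M j - r j A) = 0" by (simp add: sum_subtractf)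
  moreover have nonneg: "0 \<le> M j - r j A" if "j \<in> {..<k}" for j
    using rank_le_color_class[of j A] that A by (simp add: M_def)
  ultimately have "M j - r j A = 0"
    using sum_nonneg_eq_0_iff[of "{..<k}" "\<lambda>j. M j - r j A", OF _ nonneg] j by simp
  then show ?thesis by (simp add: M_def)
qed

end

lemma Delta_sum_nth:
  assumes "N \<in> Delta E \<sigma> k" "A \<subseteq> E"
  shows "\<sigma> A = (\<Sum>j<k. (N ! j) A)"
  using assms by (simp add: Delta_def sum_list_sum_nth atLeast0LessThan)

lemma hypergraph_decomposition_of_Delta:
  assumes "hypergraph E n X" "H2 n X" "H3 E n X" "condT n X t" and N: "N \<in> Delta E \<sigma> k"
    and agree: "\<forall>A. A \<subseteq> E \<and> (card A \<le> 3 \<or> cond_b n X t A \<or> cond_c n X t A \<or> cond_d n X t A)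
      \<longrightarrow> \<sigma> A = rho n X t A"
  shows "hypergraph_decomposition E n X t k (\<lambda>j. N ! j)"
proof (unfold_locales)
  show "hypergraph E n X" "H2 n X" "H3 E n X" "condT n X t" by fact+
  show "matroid_rank E (N ! j)" if "j < k" for j
    using N that by (auto simp: Delta_def)
  show "(\<Sum>j<k. (N ! j) A) = rho n X t A"
    if "A \<subseteq> E" "card A \<le> 3 \<or> cond_b n X t A \<or> cond_c n X t A \<or> cond_d n X t A" for A
    using agree that Delta_sum_nth[OF N that(1)] by simp
qed

lemma ex_proper_coloring_of_Delta:
  assumes "hypergraph E n X" "H2 n X" "H3 E n X" "condT n X t" and N: "N \<in> Delta E \<sigma> k"
    and "\<forall>A. A \<subseteq> E \<and> (card A \<le> 3 \<or> cond_b n X t A \<or> cond_c n X t A \<or> cond_d n X t A)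
      \<longrightarrow> \<sigma> A = rho n X t A"
  shows "\<exists>c. proper_coloring n X k c \<and> int (c_one n k c) + 2 * int (c_two_plus n k c) \<le> \<sigma> E"
proof -
  interpret hypergraph_decomposition E n X t k "\<lambda>j. N ! j"
    using hypergraph_decomposition_of_Delta assms by blast
  show ?thesis using ex_proper_coloring_le_sum_rank Delta_sum_nth[OF N] by simp
qed

lemma phi_eq:
  "phi E n X t k c = map (\<lambda>i A. \<Sum>h\<in>{h \<in> {1..n}. c h = i}. uniform_rank (t h) (X h) A) [1..<k+1]"
  by (simp add: phi_def uniform_rank_def)

lemma phi_nth:
  "i < k \<Longrightarrow> phi E n X t k c ! i = (\<lambda>A. \<Sum>h\<in>{h \<in> {1..n}. c h = Suc i}. uniform_rank (t h) (X h) A)"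
  by (simp add: phi_eq del: upt_Suc)

lemma phi_in_Delta:
  assumes hyp: "hypergraph E n X" and c: "proper_coloring n X k c"
  shows "phi E n X t k c \<in> Delta E (rho n X t) k"
proof -
  define f where "f i A = (\<Sum>h\<in>{h \<in> {1..n}. c h = i}. uniform_rank (t h) (X h) A)" for i A
  have phi: "phi E n X t k c = map f [1..<k+1]" unfolding phi_eq f_def ..
  have "matroid_rank E (f i)" for i
    unfolding f_def
  proof (rule matroid_rank_direct_sum_uniform)
    show "finite E" "\<And>h. h \<in> {h \<in> {1..n}. c h = i} \<Longrightarrow> X h \<subseteq> E"
      using hyp by (simp_all add: hypergraph_def)
    fix h h' assume "h \<in> {h \<in> {1..n}. c h = i}" "h' \<in> {h \<in> {1..n}. c h = i}" "h \<noteq> h'"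
    then have "h \<in> {1..n}" "h' \<in> {1..n}" "h \<noteq> h'" "c h = c h'" by auto
    with c show "X h \<inter> X h' = {}" unfolding proper_coloring_def by metis
  qed simp
  moreover have "(\<Sum>r\<leftarrow>map f [1..<k+1]. r A) = rho n X t A" for A
  proof -
    have "(\<Sum>r\<leftarrow>map f [1..<k+1]. r A) = (\<Sum>i\<leftarrow>[1..<k+1]. f i A)" by (simp add: comp_def)
    also have "\<dots> = (\<Sum>i\<in>{1..k}. f i A)"
      by (simp add: sum_list_distinct_conv_sum_set atLeastLessThanSuc_atLeastAtMost del: upt_Suc)
    also have "\<dots> = (\<Sum>h\<in>{1..n}. uniform_rank (t h) (X h) A)"
      unfolding f_def by (rule sum.group) (use c in \<open>auto simp: proper_coloring_def\<close>)
    finally show ?thesis by (simp add: rho_def uniform_rank_def)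
  qed
  ultimately show ?thesis unfolding Delta_def phi by auto
qed

lemma Delta_subset_phi:
  assumes "hypergraph E n X" "H2 n X" "H3 E n X" "condT n X t" and N: "N \<in> Delta E (rho n X t) k"
  shows "N \<in> phi E n X t k ` {c. proper_coloring n X k c}"
proof -
  interpret hypergraph_decomposition E n X t k "\<lambda>j. N ! j"
    using hypergraph_decomposition_of_Delta assms by blast
  define c where "c h = color h + 1" for h
  have "proper_coloring n X k c"
    unfolding proper_coloring_def c_def using color_less color_ne by fastforce
  moreover have "N = phi E n X t k c"
  proof (rule nth_equalityI)
    show "length N = length (phi E n X t k c)" using N by (simp add: Delta_def phi_def)
  next
    fix i assume "i < length N"
    then have i: "i < k" using N by (simp add: Delta_def)
    show "N ! i = phi E n X t k c ! i"
    proof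
      fix A
      have "(N ! i) A = (N ! i) (A \<inter> E)" using matroid_rank_restrict[OF matroid[OF i]] .
      also have "\<dots> = (\<Sum>h\<in>{h \<in> {1..n}. color h = i}. uniform_rank (t h) (X h) (A \<inter> E))"
        using rank_eq_color_class[OF _ i] Delta_sum_nth[OF N] by simp
      also have "\<dots> = (\<Sum>h\<in>{h \<in> {1..n}. color h = i}. uniform_rank (t h) (X h) A)"
      proof (intro sum.cong refl)
        fix h assume "h \<in> {h \<in> {1..n}. color h = i}"
        then have "A \<inter> E \<inter> X h = A \<inter> X h" using hyperedge_subset by blast
        then show "uniform_rank (t h) (X h) (A \<inter> E) = uniform_rank (t h) (X h) A"
          by (simp add: uniform_rank_def)
      qed
      also have "\<dots> = (phi E n X t k c ! i) A"
        unfolding phi_nth[OF i] c_def by simp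
      finally show "(N ! i) A = (phi E n X t k c ! i) A" .
    qed
  qed
  ultimately show ?thesis by blast
qed

lemma chromatic_number_le:
  assumes "proper_coloring n X k c"
  shows "chromatic_number n X \<le> c_one n k c + c_two_plus n k c"
  using chromatic_number_le_card_image[OF assms] card_image_le_c_one_c_two_plus[of n c k] assms
  by (simp add: proper_coloring_def)

theorem theorem2p9:
  fixes E :: "'a set" and n :: nat and X :: "nat \<Rightarrow> 'a set" and t :: "nat \<Rightarrow> nat"
    and \<sigma> :: "'a set \<Rightarrow> int"
  assumes hyp: "hypergraph E n X"
    and t_bounds: "\<forall>i \<in> {1..n}. t i \<le> card (X i)"
    and h2: "H2 n X"
    and h3: "H3 E n X"
    and hT: "condT n X t"
    and poly: "polymatroid E \<sigma>"
    and agree: "\<forall>A. A \<subseteq> E \<and> (card A \<le> 3 \<or> cond_b n X t A \<or> cond_c n X t A \<or> cond_d n X t A)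
                  \<longrightarrow> \<sigma> A = rho n X t A"
  shows "(\<forall>k \<ge> 1. \<forall>N \<in> Delta E \<sigma> k. \<exists>c. proper_coloring n X k c \<and>
              \<sigma> E \<ge> int (c_one n k c) + 2 * int (c_two_plus n k c))
       \<and> (\<forall>k \<ge> 1. phi E n X t k ` {c. proper_coloring n X k c} = Delta E (rho n X t) k)
       \<and> (\<sigma> E < int (chromatic_number n X) \<longrightarrow> indecomposable E \<sigma>)"
proof -
  \<comment> \<open>\<open>t_bounds\<close> follows from \<open>condT\<close>.\<close>
  have coloring: "\<exists>c. proper_coloring n X k c \<and> int (c_one n k c) + 2 * int (c_two_plus n k c) \<le> \<sigma> E"
    if "N \<in> Delta E \<sigma> k" for k N
    using ex_proper_coloring_of_Delta[OF hyp h2 h3 hT that agree] .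
  have "indecomposable E \<sigma>" if "\<sigma> E < int (chromatic_number n X)"
    unfolding indecomposable_def
  proof
    assume "\<exists>k N. N \<in> Delta E \<sigma> k"
    then obtain k c where "proper_coloring n X k c" "int (c_one n k c) + 2 * int (c_two_plus n k c) \<le> \<sigma> E"
      using coloring by blast
    then show False using chromatic_number_le[of n X k c] that by linarith
  qed
  moreover have "phi E n X t k ` {c. proper_coloring n X k c} = Delta E (rho n X t) k" for k
    using phi_in_Delta[OF hyp] Delta_subset_phi[OF hyp h2 h3 hT] by blast
  ultimately show ?thesis using coloring by auto
qed

end
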